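(* As formal power series in $t$ with coefficients in symmetric functions, $$\sum_{n\ge0}\mathrm{SH}_n(x)\,t^{n+1}=\bigl(t\,K(x,-t)\bigr)^{\langle-1\rangle},$$ where $K(x,t)=\prod_i\frac{1+x_it}{1-x_it}$ and ${}^{\langle-1\rangle}$ denotes compositional inverse with respect to $t$.
   Context: Work in the ring $\Lambda_{\mathbb Q}$ of symmetric functions with rational coefficients in variables $x=(x_1,x_2,\dots)$; $p_k$ denotes the power sum. For $f\in\Lambda_{\mathbb Q}$, its shiftification $f(x/x)$ is obtained by writing $f$ as a polynomial in the power sums and substituting $p_{2i+1}\mapsto 2p_{2i+1}$ and $p_{2i}\mapsto 0$ for all $i\ge1$. A parking function of length $n$ is a sequence $(a_1,\dots,a_n)$ of positive integers whose weakly increasing rearrangement $b_1\le\cdots\le b_n$ satisfies $b_i\le i$ for all $i$. The symmetric group $S_n$ acts on the set of parking functions of length $n$ by permuting coordinates; $\mathrm{PF}_n$ denotes the Frobenius characteristic of this permutation representation ($\mathrm{PF}_0=1$). Define $\mathrm{SH}_n(x)=\mathrm{PF}_n(x/x)$. *)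

theory Defs
  imports Complex_Main "HOL-Library.Poly_Mapping" "HOL-Library.Multiset" "HOL-Library.FuncSet"
    "HOL-Combinatorics.Permutations" "HOL-Computational_Algebra.Formal_Power_Series"
begin

text \<open>Lambda_Q is modelled as the polynomial ring Q[p_1,p_2,...] in the power sums
 (which are algebraically independent generators of Lambda_Q): an element is a finitely
 supported map from partitions (multisets of positive integers) lambda to the
 coefficient of p_lambda = p_lambda1 * p_lambda2 * ... .  Multiplication of
 poly_mappings over the monoid (nat multiset, +) is exactly p_lambda * p_mu = p_(lambda+mu).\<close>

type_synonym symf = "nat multiset \<Rightarrow>\<^sub>0 rat"

definition sym_valid :: "symf \<Rightarrow> bool" where
  "sym_valid F \<longleftrightarrow> (\<forall>lam\<in>Poly_Mapping.keys F. 0 \<notin># lam)"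

definition pmon :: "nat multiset \<Rightarrow> symf" where
  "pmon lam = Poly_Mapping.single lam 1"

definition sc :: "rat \<Rightarrow> symf" where
  "sc c = Poly_Mapping.single {#} c"

definition psum :: "nat \<Rightarrow> symf" where
  "psum k = pmon {#k#}"

text \<open>Realisation in the variables x_1, x_2, ... (indexed by nat): coefficient of the
 monomial x^alpha (alpha a finitely supported exponent vector) in p_lambda, namely the
 number of ways to assign each part of lambda to a variable so that the exponents add up
 to alpha.\<close>
definition pmon_mcoeff :: "nat multiset \<Rightarrow> (nat \<Rightarrow>\<^sub>0 nat) \<Rightarrow> nat" where
  "pmon_mcoeff lam alpha =
     (let l = sorted_list_of_multiset lam in
      card {f \<in> {..<length l} \<rightarrow>\<^sub>E Poly_Mapping.keys alpha.
              \<forall>i. Poly_Mapping.lookup alpha i = (\<Sum>j | j < length l \<and> f j = i. l ! j)})"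

definition mexp :: "symf \<Rightarrow> (nat \<Rightarrow>\<^sub>0 nat) \<Rightarrow> rat" where
  "mexp F alpha = (\<Sum>lam\<in>Poly_Mapping.keys F.
                      Poly_Mapping.lookup F lam * of_nat (pmon_mcoeff lam alpha))"

text \<open>K(x,t) = prod_i (1 + x_i t)/(1 - x_i t) = prod_i (1 + 2 sum_{k>=1} x_i^k t^k):
 the coefficient of t^n is the symmetric function whose coefficient of x^alpha is
 2^(number of variables occurring in alpha) if |alpha| = n and 0 otherwise.\<close>
definition K_coeff :: "nat \<Rightarrow> symf" where
  "K_coeff n = (THE q. sym_valid q \<and>
      mexp q = (\<lambda>alpha. if (\<Sum>i\<in>Poly_Mapping.keys alpha. Poly_Mapping.lookup alpha i) = n
                         then 2 ^ card (Poly_Mapping.keys alpha) else 0))"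

definition K_fps :: "symf fps" where
  "K_fps = Abs_fps K_coeff"

definition parking :: "nat \<Rightarrow> nat list set" where
  "parking n = {a. length a = n \<and> (\<forall>x\<in>set a. 0 < x) \<and> (\<forall>i<n. sort a ! i \<le> i + 1)}"

definition pf_char :: "nat \<Rightarrow> (nat \<Rightarrow> nat) \<Rightarrow> nat" where
  "pf_char n \<sigma> = card {a \<in> parking n. \<forall>i<n. a ! (\<sigma> i) = a ! i}"

definition cyc :: "(nat \<Rightarrow> nat) \<Rightarrow> nat \<Rightarrow> nat set" where
  "cyc \<sigma> i = {(\<sigma> ^^ k) i | k. True}"

definition cycle_type :: "nat \<Rightarrow> (nat \<Rightarrow> nat) \<Rightarrow> nat multiset" where
  "cycle_type n \<sigma> = image_mset card (mset_set {cyc \<sigma> i | i. i < n})"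

definition PF :: "nat \<Rightarrow> symf" where
  "PF n = sc (1 / fact n) *
     (\<Sum>\<sigma> | \<sigma> permutes {..<n}. sc (of_nat (pf_char n \<sigma>)) * pmon (cycle_type n \<sigma>))"

text \<open>shiftification f(x/x): the ring endomorphism p_(2i+1) -> 2 p_(2i+1), p_(2i) -> 0\<close>
definition shiftify :: "symf \<Rightarrow> symf" where
  "shiftify F = (\<Sum>lam\<in>Poly_Mapping.keys F.
      sc (Poly_Mapping.lookup F lam * (if \<forall>k\<in>#lam. odd k then 2 ^ size lam else 0)) * pmon lam)"

definition SH :: "nat \<Rightarrow> symf" where
  "SH n = shiftify (PF n)"

end

theory Submission
  imports Defs "HOL-Library.Multiset_Order" "HOL-Combinatorics.Orbits"
begin

text \<open>A permutation of {0..<n} with c cycles fixes (n + 1)^c words over {0..n}, and by Pollak's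
  cycle lemma each of them is a rotation of exactly one fixed parking function; hence it fixes
  (n + 1)^(c - 1) parking functions. Shiftification keeps the permutations with only odd cycles,
  each cycle of length k contributing 2 p_k, so by the exponential formula
  SH_n = [t^n] E_(2(n+1)) / (n + 1) with E_c = exp (c (p_1 t + p_3 t^3/3 + p_5 t^5/5 + ...)).
  Now E_2 = K, E_c E_d = E_(c+d) and E_c(-t) = E_(-c), so SH_n = [t^n] K^(n+1) / (n + 1), which by
  Lagrange inversion is the coefficient of t^(n+1) in the compositional inverse of
  t / K(t) = t K(-t).\<close>

unbundle fps_syntax

abbreviation pcoeff :: "symf \<Rightarrow> nat multiset \<Rightarrow> rat" where
  "pcoeff \<equiv> Poly_Mapping.lookup"

abbreviation expo :: "(nat \<Rightarrow>\<^sub>0 nat) \<Rightarrow> nat \<Rightarrow> nat" where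
  "expo \<equiv> Poly_Mapping.lookup"

section \<open>Scalars, power-sum monomials and shiftification\<close>

lemma poly_mapping_sum_single:
  "F = (\<Sum>l\<in>Poly_Mapping.keys F. Poly_Mapping.single l (Poly_Mapping.lookup F l))"
  by (rule poly_mapping_eqI)
     (auto simp: lookup_sum lookup_single when_def in_keys_iff sum.delta')

lemma lookup_single_mult:
  "pcoeff (Poly_Mapping.single a c * F) (a + b) = c * pcoeff F b"
proof -
  have "Poly_Mapping.single a c * F =
      (\<Sum>l\<in>Poly_Mapping.keys F. Poly_Mapping.single (a + l) (c * pcoeff F l))"
    by (subst poly_mapping_sum_single[of F]) (simp add: sum_distrib_left mult_single)
  then show ?thesis
    by (cases "b \<in> Poly_Mapping.keys F")
       (auto simp: lookup_sum lookup_single when_def in_keys_iff sum.delta')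
qed

lemma lookup_sc_mult [simp]: "pcoeff (sc c * F) l = c * pcoeff F l"
  using lookup_single_mult[of "{#}" c F l] by (simp add: sc_def)

lemma sc_mult: "sc a * sc b = sc (a * b)"
  by (simp add: sc_def mult_single)

lemma sc_add: "sc (a + b) = sc a + sc b"
  by (simp add: sc_def single_add)

lemma sc_uminus: "sc (- a) = - sc a"
  by (simp add: sc_def single_uminus)

lemma sc_1 [simp]: "sc 1 = 1"
  by (simp add: sc_def)

lemma sc_0 [simp]: "sc 0 = 0"
  by (simp add: sc_def)

lemma sc_of_nat: "sc (of_nat n) = of_nat n"
  by (simp add: sc_def)

lemma sc_inverse_mult_cancel: "n \<noteq> 0 \<Longrightarrow> sc (1 / of_nat n) * (of_nat n * F) = F"
  by (simp add: sc_of_nat[symmetric] mult.assoc[symmetric] sc_mult)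

lemma of_nat_mult_symf_cancel: "n \<noteq> 0 \<Longrightarrow> of_nat n * (F::symf) = of_nat n * G \<Longrightarrow> F = G"
  by (metis sc_inverse_mult_cancel)

lemma pmon_add: "pmon (a + b) = pmon a * pmon b"
  by (simp add: pmon_def mult_single)

lemma pmon_add_mset: "pmon (add_mset k M) = psum k * pmon M"
  using pmon_add[of "{#k#}" M] by (simp add: psum_def)

lemma pmon_empty [simp]: "pmon {#} = 1"
  by (simp add: pmon_def)

lemma sc_mult_pmon: "sc c * pmon l = Poly_Mapping.single l c"
  by (simp add: sc_def pmon_def mult_single)

definition shift_weight :: "nat multiset \<Rightarrow> rat" where
  "shift_weight l = (if \<forall>k\<in>#l. odd k then 2 ^ size l else 0)"

lemma lookup_shiftify: "pcoeff (shiftify F) l = pcoeff F l * shift_weight l"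
proof -
  have "shiftify F =
      (\<Sum>m\<in>Poly_Mapping.keys F. Poly_Mapping.single m (pcoeff F m * shift_weight m))"
    by (simp add: shiftify_def sc_mult_pmon shift_weight_def)
  then show ?thesis
    by (cases "l \<in> Poly_Mapping.keys F")
       (auto simp: lookup_sum lookup_single when_def in_keys_iff sum.delta')
qed

lemma shiftify_add: "shiftify (F + G) = shiftify F + shiftify G"
  by (rule poly_mapping_eqI) (simp add: lookup_shiftify lookup_add algebra_simps)

lemma shiftify_sc_mult: "shiftify (sc c * F) = sc c * shiftify F"
  by (rule poly_mapping_eqI) (simp add: lookup_shiftify)

lemma shiftify_0: "shiftify 0 = 0"
  by (rule poly_mapping_eqI) (simp add: lookup_shiftify)

lemma shiftify_sum: "shiftify (sum f A) = (\<Sum>x\<in>A. shiftify (f x))"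
  by (induction A rule: infinite_finite_induct) (auto simp: shiftify_add shiftify_0)

lemma shiftify_pmon: "shiftify (pmon l) = sc (shift_weight l) * pmon l"
  by (rule poly_mapping_eqI) (simp add: lookup_shiftify pmon_def lookup_single when_def)

section \<open>The monomial expansion\<close>

definition assignments :: "nat list \<Rightarrow> (nat \<Rightarrow>\<^sub>0 nat) \<Rightarrow> nat set \<Rightarrow> (nat \<Rightarrow> nat) set" where
  "assignments l \<alpha> S = {f \<in> {..<length l} \<rightarrow>\<^sub>E S.
      \<forall>i. expo \<alpha> i = (\<Sum>j | j < length l \<and> f j = i. l ! j)}"

lemma pmon_mcoeff_card_assignments:
  "pmon_mcoeff lam \<alpha> = card (assignments (sorted_list_of_multiset lam) \<alpha> (Poly_Mapping.keys \<alpha>))"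
  by (simp add: pmon_mcoeff_def assignments_def Let_def)

lemma sum_filter_lessThan:
  "(\<Sum>j | j < n \<and> f j = i. (g::nat \<Rightarrow> 'a::comm_monoid_add) j) =
     (\<Sum>j<n. if f j = i then g j else 0)"
proof -
  have "{j. j < n \<and> f j = i} = {j\<in>{..<n}. f j = i}" by auto
  then show ?thesis using sum.inter_filter[of "{..<n}" g "\<lambda>j. f j = i"] by simp
qed

lemma finite_assignments: "finite S \<Longrightarrow> finite (assignments l \<alpha> S)"
  unfolding assignments_def
  by (rule finite_subset[OF _ finite_PiE[of "{..<length l}" "\<lambda>_. S"]]) auto

lemma assignments_keys:
  assumes pos: "\<forall>x\<in>set l. 0 < x" and sub: "Poly_Mapping.keys \<alpha> \<subseteq> S"
  shows "assignments l \<alpha> S = assignments l \<alpha> (Poly_Mapping.keys \<alpha>)"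
proof
  show "assignments l \<alpha> (Poly_Mapping.keys \<alpha>) \<subseteq> assignments l \<alpha> S"
    using sub unfolding assignments_def by (auto simp: PiE_iff)
next
  show "assignments l \<alpha> S \<subseteq> assignments l \<alpha> (Poly_Mapping.keys \<alpha>)"
  proof
    fix f assume f: "f \<in> assignments l \<alpha> S"
    have "f j \<in> Poly_Mapping.keys \<alpha>" if j: "j < length l" for j
    proof -
      have "l ! j \<le> (\<Sum>j' | j' < length l \<and> f j' = f j. l ! j')"
        by (rule member_le_sum) (use j in auto)
      also have "\<dots> = expo \<alpha> (f j)" using f by (simp add: assignments_def)
      finally have "l ! j \<le> expo \<alpha> (f j)" .
      moreover have "0 < l ! j" using pos nth_mem[OF j] by blast
      ultimately show ?thesis by (auto simp: in_keys_iff)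
    qed
    then show "f \<in> assignments l \<alpha> (Poly_Mapping.keys \<alpha>)"
      using f by (auto simp: assignments_def PiE_iff)
  qed
qed

lemma card_assignments_permute_le:
  assumes m: "mset l = mset l'" and S: "finite S"
  shows "card (assignments l' \<alpha> S) \<le> card (assignments l \<alpha> S)"
proof -
  obtain p where p: "p permutes {..<length l'}" "permute_list p l' = l"
    using mset_eq_permutation[OF m] by blast
  define n where "n = length l'"
  have len: "length l = n" using p(2) by (auto simp: n_def)
  have pin: "p j < n" if "j < n" for j using permutes_in_image[OF p(1)] that by (auto simp: n_def)
  have l_nth: "l ! j = l' ! p j" if "j < n" for j
    using permute_list_nth[OF p(1), of j] that p(2) by (auto simp: n_def)
  define \<Phi> where "\<Phi> g = (\<lambda>j. if j < n then g (p j) else undefined)" for g :: "nat \<Rightarrow> nat"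
  have "inj_on \<Phi> (assignments l' \<alpha> S)"
  proof
    fix g h assume g: "g \<in> assignments l' \<alpha> S" and h: "h \<in> assignments l' \<alpha> S"
      and e: "\<Phi> g = \<Phi> h"
    show "g = h"
    proof
      fix x
      show "g x = h x"
      proof (cases "x < n")
        case True
        then have "x \<in> p ` {..<n}" using permutes_image[OF p(1)] by (simp add: n_def)
        then obtain j where "j < n" "p j = x" by auto
        then show ?thesis using fun_cong[OF e, of j] by (simp add: \<Phi>_def)
      next
        case False
        then show ?thesis using g h by (auto simp: assignments_def PiE_iff n_def extensional_def)
      qed
    qed
  qed
  moreover have "\<Phi> ` assignments l' \<alpha> S \<subseteq> assignments l \<alpha> S"
  proof
    fix f assume "f \<in> \<Phi> ` assignments l' \<alpha> S"
    then obtain g where g: "g \<in> assignments l' \<alpha> S" and f: "f = \<Phi> g" by auto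
    have "f \<in> {..<length l} \<rightarrow>\<^sub>E S"
      using g pin by (auto simp: assignments_def PiE_iff f \<Phi>_def len n_def extensional_def)
    moreover have "expo \<alpha> i = (\<Sum>j | j < length l \<and> f j = i. l ! j)" for i
    proof -
      have "(\<Sum>j | j < length l \<and> f j = i. l ! j) = (\<Sum>j<n. if g (p j) = i then l' ! p j else 0)"
        by (simp add: sum_filter_lessThan len f \<Phi>_def l_nth cong: if_cong)
      also have "\<dots> = (\<Sum>j<n. if g j = i then l' ! j else 0)"
        using sum.permute[OF p(1), of "\<lambda>j. if g j = i then l' ! j else 0"]
        by (simp add: n_def comp_def)
      also have "\<dots> = expo \<alpha> i" using g by (simp add: assignments_def sum_filter_lessThan n_def)
      finally show ?thesis by simp
    qed
    ultimately show "f \<in> assignments l \<alpha> S" by (simp add: assignments_def)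
  qed
  ultimately show ?thesis using card_inj_on_le finite_assignments[OF S] by blast
qed

lemma card_assignments_permute:
  assumes "mset l = mset l'" "finite S"
  shows "card (assignments l \<alpha> S) = card (assignments l' \<alpha> S)"
  using card_assignments_permute_le[OF assms, of \<alpha>]
    card_assignments_permute_le[OF assms(1)[symmetric] assms(2), of \<alpha>] by linarith

lemma lookup_minus_single:
  "expo (\<alpha> - Poly_Mapping.single i k) j = expo \<alpha> j - (if i = j then k else 0)"
  by (simp add: lookup_minus lookup_single when_def)

lemma keys_minus_single_subset:
  "Poly_Mapping.keys (\<alpha> - Poly_Mapping.single i k) \<subseteq> Poly_Mapping.keys (\<alpha>::nat \<Rightarrow>\<^sub>0 nat)"
  by (auto simp: in_keys_iff lookup_minus_single)

lemma expo_eq_single_plus_iff: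
  "(\<forall>i'. expo \<alpha> i' = (if i = i' then k else 0) + T i') \<longleftrightarrow>
     k \<le> expo \<alpha> i \<and> (\<forall>i'. expo (\<alpha> - Poly_Mapping.single i k) i' = T i')"
  by (auto simp: lookup_minus_single)

lemma sum_filter_Cons:
  "(\<Sum>j | j < Suc (length l) \<and> f j = i. (k # l) ! j)
     = (if f 0 = i then k else 0) + (\<Sum>j | j < length l \<and> f (Suc j) = i. l ! j)"
  unfolding sum_filter_lessThan sum.lessThan_Suc_shift nth_Cons_Suc by simp

lemma card_assignments_Cons:
  "card (assignments (k # l) \<alpha> (Poly_Mapping.keys \<alpha>)) =
    (\<Sum>i\<in>{i\<in>Poly_Mapping.keys \<alpha>. k \<le> expo \<alpha> i}.
       card (assignments l (\<alpha> - Poly_Mapping.single i k) (Poly_Mapping.keys \<alpha>)))"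
proof -
  define K where "K = Poly_Mapping.keys \<alpha>"
  define n where "n = length l"
  define tail where "tail f = (\<lambda>j. if j < n then f (Suc j) else undefined)" for f :: "nat \<Rightarrow> nat"
  define cons where "cons ig = (\<lambda>j. if j = 0 then fst ig else if j < Suc n then snd ig (j - 1)
    else undefined)" for ig :: "nat \<times> (nat \<Rightarrow> nat)"
  define A where "A = assignments (k # l) \<alpha> K"
  define B where "B = (SIGMA i:{i\<in>K. k \<le> expo \<alpha> i}. assignments l (\<alpha> - Poly_Mapping.single i k) K)"
  have sum_tail: "(\<Sum>j | j < length l \<and> f (Suc j) = i'. l ! j) =
      (\<Sum>j | j < n \<and> tail f j = i'. l ! j)" for f i'
    by (rule sum.cong) (auto simp: tail_def n_def)
  have sum_cons: "(\<Sum>j | j < length l \<and> cons (i, g) (Suc j) = i'. l ! j) =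
      (\<Sum>j | j < n \<and> g j = i'. l ! j)" for i g i'
    by (rule sum.cong) (auto simp: cons_def n_def)
  have "bij_betw (\<lambda>f. (f 0, tail f)) A B"
  proof (rule bij_betw_byWitness[where f'=cons])
    show "\<forall>f\<in>A. cons (f 0, tail f) = f"
      by (auto simp: A_def assignments_def n_def cons_def tail_def fun_eq_iff PiE_iff extensional_def)
    show "\<forall>b\<in>B. (cons b 0, tail (cons b)) = b"
      by (auto simp: B_def assignments_def n_def cons_def tail_def fun_eq_iff PiE_iff extensional_def)
    show "(\<lambda>f. (f 0, tail f)) ` A \<subseteq> B"
    proof clarify
      fix f assume "f \<in> A"
      then have f: "f \<in> {..<Suc n} \<rightarrow>\<^sub>E K"
        "\<forall>i'. expo \<alpha> i' = (if f 0 = i' then k else 0) + (\<Sum>j | j < n \<and> tail f j = i'. l ! j)"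
        by (auto simp: A_def assignments_def n_def sum_filter_Cons sum_tail)
      moreover have "tail f \<in> {..<n} \<rightarrow>\<^sub>E K" using f by (auto simp: tail_def PiE_iff extensional_def)
      ultimately show "(f 0, tail f) \<in> B"
        by (auto simp: B_def assignments_def n_def expo_eq_single_plus_iff)
    qed
    show "cons ` B \<subseteq> A"
    proof clarify
      fix i g assume "(i, g) \<in> B"
      then have "i \<in> K" "g \<in> {..<n} \<rightarrow>\<^sub>E K"
        "\<forall>i'. expo \<alpha> i' = (if i = i' then k else 0) + (\<Sum>j | j < n \<and> g j = i'. l ! j)"
        by (auto simp: B_def assignments_def n_def expo_eq_single_plus_iff)
      moreover have "cons (i, g) 0 = i" by (simp add: cons_def)
      ultimately show "cons (i, g) \<in> A"
        unfolding A_def assignments_def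
        by (simp add: sum_filter_Cons sum_cons n_def) (auto simp: cons_def n_def PiE_iff extensional_def)
    qed
  qed
  then have "card A = card B" by (rule bij_betw_same_card)
  also have "card B = (\<Sum>i\<in>{i\<in>K. k \<le> expo \<alpha> i}.
      card (assignments l (\<alpha> - Poly_Mapping.single i k) K))"
    unfolding B_def by (rule card_SigmaI) (auto simp: K_def intro: finite_assignments)
  finally show ?thesis by (simp add: A_def K_def)
qed

lemma pmon_mcoeff_add_mset:
  assumes "0 \<notin># lam"
  shows "pmon_mcoeff (add_mset k lam) \<alpha> =
    (\<Sum>i\<in>{i\<in>Poly_Mapping.keys \<alpha>. k \<le> expo \<alpha> i}. pmon_mcoeff lam (\<alpha> - Poly_Mapping.single i k))"
proof -
  let ?K = "Poly_Mapping.keys \<alpha>"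
  let ?l = "sorted_list_of_multiset lam"
  have pos: "\<forall>x\<in>set ?l. 0 < x" using assms by (auto intro: gr0I)
  have "pmon_mcoeff (add_mset k lam) \<alpha> =
      card (assignments (sorted_list_of_multiset (add_mset k lam)) \<alpha> ?K)"
    by (simp add: pmon_mcoeff_card_assignments)
  also have "\<dots> = card (assignments (k # ?l) \<alpha> ?K)"
    by (rule card_assignments_permute) auto
  also have "\<dots> = (\<Sum>i\<in>{i\<in>?K. k \<le> expo \<alpha> i}.
      card (assignments ?l (\<alpha> - Poly_Mapping.single i k) ?K))"
    by (rule card_assignments_Cons)
  also have "\<dots> = (\<Sum>i\<in>{i\<in>?K. k \<le> expo \<alpha> i}. pmon_mcoeff lam (\<alpha> - Poly_Mapping.single i k))"
    by (simp add: pmon_mcoeff_card_assignments assignments_keys[OF pos keys_minus_single_subset])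
  finally show ?thesis .
qed

lemma pmon_mcoeff_empty: "pmon_mcoeff {#} \<alpha> = (if \<alpha> = 0 then 1 else 0)"
proof -
  have "assignments [] \<alpha> (Poly_Mapping.keys \<alpha>) = (if \<alpha> = 0 then {\<lambda>_. undefined} else {})"
    by (auto simp: assignments_def poly_mapping_eq_iff fun_eq_iff)
  then show ?thesis by (simp add: pmon_mcoeff_card_assignments)
qed

lemma mexp_eq_sum_superset:
  assumes "finite S" "Poly_Mapping.keys F \<subseteq> S"
  shows "mexp F \<alpha> = (\<Sum>l\<in>S. pcoeff F l * of_nat (pmon_mcoeff l \<alpha>))"
  unfolding mexp_def using assms by (intro sum.mono_neutral_left) (auto simp: in_keys_iff)

lemma mexp_add: "mexp (F + G) \<alpha> = mexp F \<alpha> + mexp G \<alpha>"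
proof -
  let ?S = "Poly_Mapping.keys F \<union> Poly_Mapping.keys G"
  have "mexp (F + G) \<alpha> = (\<Sum>l\<in>?S. pcoeff (F + G) l * of_nat (pmon_mcoeff l \<alpha>))"
    by (rule mexp_eq_sum_superset) (use keys_add[of F G] in auto)
  also have "\<dots> = (\<Sum>l\<in>?S. pcoeff F l * of_nat (pmon_mcoeff l \<alpha>)) +
      (\<Sum>l\<in>?S. pcoeff G l * of_nat (pmon_mcoeff l \<alpha>))"
    by (simp add: lookup_add algebra_simps sum.distrib)
  also have "\<dots> = mexp F \<alpha> + mexp G \<alpha>"
    by (subst (1 2) mexp_eq_sum_superset[of ?S]) auto
  finally show ?thesis .
qed

lemma mexp_diff: "mexp (F - G) \<alpha> = mexp F \<alpha> - mexp G \<alpha>"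
proof -
  let ?S = "Poly_Mapping.keys F \<union> Poly_Mapping.keys G"
  have "mexp (F - G) \<alpha> = (\<Sum>l\<in>?S. pcoeff (F - G) l * of_nat (pmon_mcoeff l \<alpha>))"
    by (rule mexp_eq_sum_superset) (auto simp: in_keys_iff lookup_minus)
  also have "\<dots> = (\<Sum>l\<in>?S. pcoeff F l * of_nat (pmon_mcoeff l \<alpha>)) -
      (\<Sum>l\<in>?S. pcoeff G l * of_nat (pmon_mcoeff l \<alpha>))"
    by (simp add: lookup_minus algebra_simps sum_subtractf)
  also have "\<dots> = mexp F \<alpha> - mexp G \<alpha>"
    by (subst (1 2) mexp_eq_sum_superset[of ?S]) auto
  finally show ?thesis .
qed

lemma mexp_sc_mult: "mexp (sc c * F) \<alpha> = c * mexp F \<alpha>"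
proof -
  have "mexp (sc c * F) \<alpha> = (\<Sum>l\<in>Poly_Mapping.keys F. c * (pcoeff F l * of_nat (pmon_mcoeff l \<alpha>)))"
    by (subst mexp_eq_sum_superset[of "Poly_Mapping.keys F"]) (auto simp: in_keys_iff mult.assoc)
  then show ?thesis by (simp add: mexp_def sum_distrib_left)
qed

lemma mexp_0: "mexp 0 \<alpha> = 0"
  by (simp add: mexp_def)

lemma mexp_sum: "mexp (sum f A) \<alpha> = (\<Sum>x\<in>A. mexp (f x) \<alpha>)"
  by (induction A rule: infinite_finite_induct) (auto simp: mexp_add mexp_0)

lemma mexp_1: "mexp 1 \<alpha> = (if \<alpha> = 0 then 1 else 0)"
proof -
  have "Poly_Mapping.keys (1::symf) = {{#}}"
    by (metis keys_single one_neq_zero single_one)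
  then show ?thesis by (simp add: mexp_def pmon_mcoeff_empty lookup_one)
qed

lemma sym_valid_add: "sym_valid F \<Longrightarrow> sym_valid G \<Longrightarrow> sym_valid (F + G)"
  unfolding sym_valid_def using keys_add[of F G] by blast

lemma sym_valid_diff: "sym_valid F \<Longrightarrow> sym_valid G \<Longrightarrow> sym_valid (F - G)"
  unfolding sym_valid_def by (auto simp: in_keys_iff lookup_minus)

lemma sym_valid_sc_mult: "sym_valid F \<Longrightarrow> sym_valid (sc c * F)"
  unfolding sym_valid_def by (auto simp: in_keys_iff)

lemma sym_valid_sum: "(\<And>x. x \<in> A \<Longrightarrow> sym_valid (f x)) \<Longrightarrow> sym_valid (sum f A)"
  by (induction A rule: infinite_finite_induct) (auto simp: sym_valid_def[of 0] intro!: sym_valid_add)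

lemma keys_psum_mult: "Poly_Mapping.keys (psum k * F) \<subseteq> add_mset k ` Poly_Mapping.keys F"
proof
  fix m assume "m \<in> Poly_Mapping.keys (psum k * F)"
  then obtain a b where "m = a + b" "a \<in> Poly_Mapping.keys (psum k)" "b \<in> Poly_Mapping.keys F"
    using keys_mult by blast
  then show "m \<in> add_mset k ` Poly_Mapping.keys F" by (auto simp: psum_def pmon_def)
qed

lemma lookup_psum_mult: "pcoeff (psum k * F) (add_mset k b) = pcoeff F b"
  using lookup_single_mult[of "{#k#}" 1 F b] by (simp add: psum_def pmon_def)

lemma sym_valid_psum_mult: "0 < k \<Longrightarrow> sym_valid F \<Longrightarrow> sym_valid (psum k * F)"
  unfolding sym_valid_def using keys_psum_mult by fastforce

lemma mexp_psum_mult: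
  assumes F: "sym_valid F"
  shows "mexp (psum k * F) \<alpha> =
    (\<Sum>i\<in>{i\<in>Poly_Mapping.keys \<alpha>. k \<le> expo \<alpha> i}. mexp F (\<alpha> - Poly_Mapping.single i k))"
proof -
  let ?I = "{i\<in>Poly_Mapping.keys \<alpha>. k \<le> expo \<alpha> i}"
  have "mexp (psum k * F) \<alpha> = (\<Sum>m\<in>add_mset k ` Poly_Mapping.keys F.
      pcoeff (psum k * F) m * of_nat (pmon_mcoeff m \<alpha>))"
    by (rule mexp_eq_sum_superset) (auto intro: keys_psum_mult[THEN subsetD])
  also have "\<dots> = (\<Sum>b\<in>Poly_Mapping.keys F. pcoeff F b * of_nat (pmon_mcoeff (add_mset k b) \<alpha>))"
    by (subst sum.reindex) (auto simp: inj_on_def lookup_psum_mult)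
  also have "\<dots> = (\<Sum>b\<in>Poly_Mapping.keys F. \<Sum>i\<in>?I.
      pcoeff F b * of_nat (pmon_mcoeff b (\<alpha> - Poly_Mapping.single i k)))"
    using F by (intro sum.cong) (auto simp: sym_valid_def pmon_mcoeff_add_mset sum_distrib_left)
  also have "\<dots> = (\<Sum>i\<in>?I. mexp F (\<alpha> - Poly_Mapping.single i k))"
    by (subst sum.swap) (simp add: mexp_def)
  finally show ?thesis .
qed

lemma length_sorted_list_of_multiset [simp]: "length (sorted_list_of_multiset M) = size M"
  by (metis mset_sorted_list_of_multiset size_mset)

definition spread_monomial :: "nat multiset \<Rightarrow> nat \<Rightarrow>\<^sub>0 nat" where
  "spread_monomial lam =
     (\<Sum>j<size lam. Poly_Mapping.single j (sorted_list_of_multiset lam ! j))"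

lemma expo_spread_monomial:
  "expo (spread_monomial lam) i =
     (if i < size lam then sorted_list_of_multiset lam ! i else 0)"
  by (simp add: spread_monomial_def lookup_sum lookup_single when_def)

lemma sorted_list_of_multiset_nth_pos:
  fixes lam :: "nat multiset"
  assumes "0 \<notin># lam" "i < size lam"
  shows "0 < sorted_list_of_multiset lam ! i"
proof -
  have "sorted_list_of_multiset lam ! i \<in> set (sorted_list_of_multiset lam)"
    using assms(2) by (intro nth_mem) simp
  then have "sorted_list_of_multiset lam ! i \<in># lam" by simp
  then show ?thesis using assms(1) by (metis gr0I)
qed

lemma keys_spread_monomial:
  "0 \<notin># lam \<Longrightarrow> Poly_Mapping.keys (spread_monomial lam) = {..<size lam}"
  using sorted_list_of_multiset_nth_pos[of lam]
  by (auto simp: in_keys_iff expo_spread_monomial split: if_splits)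

lemma pmon_mcoeff_spread_monomial_self:
  assumes "0 \<notin># lam"
  shows "pmon_mcoeff lam (spread_monomial lam) \<noteq> 0"
proof -
  define l where "l = sorted_list_of_multiset lam"
  define n where "n = size lam"
  have len: "length l = n" by (simp add: l_def n_def)
  define f0 where "f0 = (\<lambda>j. if j < n then j else undefined)"
  have "{j. j < n \<and> f0 j = i} = (if i < n then {i} else {})" for i
    by (auto simp: f0_def)
  then have "f0 \<in> assignments l (spread_monomial lam) {..<n}"
    by (auto simp: assignments_def f0_def len expo_spread_monomial l_def n_def PiE_iff extensional_def)
  then show ?thesis
    using finite_assignments[of "{..<n}" l] keys_spread_monomial[OF assms]
    by (auto simp: pmon_mcoeff_card_assignments l_def n_def)
qed

lemma pmon_mcoeff_spread_monomial_eq_0: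
  assumes lam: "0 \<notin># lam" and size: "size \<mu> \<le> size lam" and ne: "\<mu> \<noteq> lam"
  shows "pmon_mcoeff \<mu> (spread_monomial lam) = 0"
proof (rule ccontr)
  define l where "l = sorted_list_of_multiset lam"
  define n where "n = size lam"
  define l' where "l' = sorted_list_of_multiset \<mu>"
  define n' where "n' = size \<mu>"
  have len: "length l = n" "length l' = n'" by (simp_all add: l_def n_def l'_def n'_def)
  have pos: "0 < l ! i" if "i < n" for i
    using sorted_list_of_multiset_nth_pos[OF lam] that by (simp add: l_def n_def)
  have expo: "expo (spread_monomial lam) i = (if i < n then l ! i else 0)" for i
    by (simp add: expo_spread_monomial l_def n_def)
  assume "pmon_mcoeff \<mu> (spread_monomial lam) \<noteq> 0"
  then have "assignments l' (spread_monomial lam) {..<n} \<noteq> {}"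
    by (auto simp: pmon_mcoeff_card_assignments keys_spread_monomial[OF lam] l'_def n_def)
  then obtain f where f: "f \<in> {..<n'} \<rightarrow>\<^sub>E {..<n}"
    and sums: "\<And>i. expo (spread_monomial lam) i = (\<Sum>j | j < n' \<and> f j = i. l' ! j)"
    by (auto simp: assignments_def len)
  have onto: "{..<n} \<subseteq> f ` {..<n'}"
  proof
    fix i assume i: "i \<in> {..<n}"
    have "{j. j < n' \<and> f j = i} \<noteq> {}"
      using sums[of i] expo[of i] pos[of i] i by (metis lessThan_iff less_not_refl sum.empty)
    then show "i \<in> f ` {..<n'}" by auto
  qed
  have "n \<le> card (f ` {..<n'})" using card_mono[OF _ onto] by simp
  also have "\<dots> \<le> n'" using card_image_le[of "{..<n'}" f] by simp
  finally have nn: "n' = n" using size by (simp add: n_def n'_def)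
  have img: "f ` {..<n} = {..<n}" using onto f nn by (auto simp: PiE_iff)
  have inj: "inj_on f {..<n}" using img by (intro eq_card_imp_inj_on) auto
  have vals: "l' ! j = l ! f j" if j: "j < n" for j
  proof -
    have "{j'. j' < n' \<and> f j' = f j} = {j}" using inj j nn by (auto simp: inj_on_def)
    moreover have "f j < n" using img j by auto
    ultimately show ?thesis using sums[of "f j"] expo[of "f j"] by simp
  qed
  have "\<mu> = mset (map (nth l') [0..<n])" using nn len map_nth[of l'] by (simp add: l'_def)
  also have "\<dots> = mset (map (\<lambda>j. l ! f j) [0..<n])"
    using vals by (intro arg_cong[where f=mset] map_cong) auto
  also have "\<dots> = image_mset (nth l) (image_mset f (mset_set {..<n}))"
    by (simp add: mset_upt multiset.map_comp comp_def atLeast0LessThan)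
  also have "\<dots> = mset (map (nth l) [0..<n])"
    using image_mset_mset_set[OF inj] img by (simp add: mset_upt atLeast0LessThan)
  also have "\<dots> = lam" using len map_nth[of l] by (simp add: l_def)
  finally show False using ne by simp
qed

text \<open>Evaluating at the spread monomial of a longest partition in the support isolates its
  coefficient.\<close>

lemma mexp_eq_0_imp_eq_0:
  assumes F: "sym_valid F" and zero: "\<And>\<alpha>. mexp F \<alpha> = 0"
  shows "F = 0"
proof (rule ccontr)
  assume "F \<noteq> 0"
  then have ne: "Poly_Mapping.keys F \<noteq> {}" by simp
  have "Max (size ` Poly_Mapping.keys F) \<in> size ` Poly_Mapping.keys F"
    by (rule Max_in) (use ne in auto)
  then obtain lam where lam: "lam \<in> Poly_Mapping.keys F" "size lam = Max (size ` Poly_Mapping.keys F)"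
    by auto
  have lam0: "0 \<notin># lam" using F lam(1) by (simp add: sym_valid_def)
  have "pmon_mcoeff \<mu> (spread_monomial lam) = 0" if "\<mu> \<in> Poly_Mapping.keys F" "\<mu> \<noteq> lam" for \<mu>
  proof (rule pmon_mcoeff_spread_monomial_eq_0[OF lam0 _ that(2)])
    show "size \<mu> \<le> size lam" unfolding lam(2) by (rule Max_ge) (use that in auto)
  qed
  then have "mexp F (spread_monomial lam) =
      (\<Sum>\<mu>\<in>{lam}. pcoeff F \<mu> * of_nat (pmon_mcoeff \<mu> (spread_monomial lam)))"
    unfolding mexp_def using lam by (intro sum.mono_neutral_right) auto
  also have "\<dots> \<noteq> 0"
    using lam(1) pmon_mcoeff_spread_monomial_self[OF lam0] by (simp add: in_keys_iff)
  finally show False using zero by simp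
qed

lemma mexp_inject:
  assumes "sym_valid F" "sym_valid G" "\<And>\<alpha>. mexp F \<alpha> = mexp G \<alpha>"
  shows "F = G"
  using mexp_eq_0_imp_eq_0[of "F - G"] assms by (simp add: sym_valid_diff mexp_diff)

section \<open>Cycle sums of permutations\<close>

lemma cyc_eq_orbit: "\<sigma> permutes A \<Longrightarrow> finite A \<Longrightarrow> cyc \<sigma> x = orbit \<sigma> x"
  unfolding cyc_def by (rule orbit_altdef_permutation[symmetric]) (auto simp: permutation_permutes)

lemma self_in_cyc: "x \<in> cyc \<sigma> x"
  unfolding cyc_def by (auto intro: exI[where x=0])

lemma funpow_in_cyc: "(\<sigma> ^^ k) x \<in> cyc \<sigma> x"
  unfolding cyc_def by auto

lemma cyc_subset: "\<sigma> permutes A \<Longrightarrow> finite A \<Longrightarrow> x \<in> A \<Longrightarrow> cyc \<sigma> x \<subseteq> A"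
  by (simp add: cyc_eq_orbit permutes_orbit_subset)

lemma cyclic_on_cyc: "\<sigma> permutes A \<Longrightarrow> finite A \<Longrightarrow> cyclic_on \<sigma> (cyc \<sigma> x)"
  by (simp add: cyc_eq_orbit cyclic_on_orbit)

lemma cyc_eq: "\<sigma> permutes A \<Longrightarrow> finite A \<Longrightarrow> y \<in> cyc \<sigma> x \<Longrightarrow> cyc \<sigma> y = cyc \<sigma> x"
  using orbit_cyclic_eq3[OF cyclic_on_cyc] by (metis cyc_eq_orbit)

lemma finite_cyc: "\<sigma> permutes A \<Longrightarrow> finite A \<Longrightarrow> finite (cyc \<sigma> x)"
  using cyclic_on_cyc finite_cyclic_on by blast

lemma cyc_apply: "\<sigma> permutes A \<Longrightarrow> finite A \<Longrightarrow> cyc \<sigma> (\<sigma> x) = cyc \<sigma> x"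
  using cyc_eq funpow_in_cyc[where \<sigma>=\<sigma> and k=1 and x=x] by simp

lemma cyc_cong:
  assumes "\<And>x. x \<in> C \<Longrightarrow> \<sigma> x = \<tau> x" "\<And>x. x \<in> C \<Longrightarrow> \<tau> x \<in> C" "x \<in> C"
  shows "cyc \<sigma> x = cyc \<tau> x"
proof -
  have "(\<sigma> ^^ k) x = (\<tau> ^^ k) x \<and> (\<tau> ^^ k) x \<in> C" for k
    using assms by (induction k) auto
  then show ?thesis by (auto simp: cyc_def)
qed

text \<open>A permutation of A is the cycle through a point glued to a permutation of the rest.\<close>

definition glue :: "nat set \<Rightarrow> (nat \<Rightarrow> nat) \<Rightarrow> (nat \<Rightarrow> nat) \<Rightarrow> nat \<Rightarrow> nat" where
  "glue C \<tau> \<rho> = (\<lambda>x. if x \<in> C then \<tau> x else \<rho> x)"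

context
  fixes A C :: "nat set" and a :: nat and \<tau> \<rho> :: "nat \<Rightarrow> nat"
  assumes A: "finite A" and CA: "C \<subseteq> A" and aC: "a \<in> C" and \<tau>: "\<tau> permutes C"
    and cyc_\<tau>: "cyc \<tau> a = C" and \<rho>: "\<rho> permutes (A - C)"
begin

lemma glue_eq_comp: "glue C \<tau> \<rho> = \<tau> \<circ> \<rho>"
proof
  fix x
  have "\<rho> x \<notin> C" if "x \<notin> C"
    using that permutes_in_image[OF \<rho>, of x] permutes_not_in[OF \<rho>, of x] by auto
  then show "glue C \<tau> \<rho> x = (\<tau> \<circ> \<rho>) x"
    using \<tau> \<rho> by (auto simp: glue_def permutes_not_in)
qed

lemma permutes_glue: "glue C \<tau> \<rho> permutes A"
  unfolding glue_eq_comp using permutes_subset[OF \<tau> CA] permutes_subset[OF \<rho>, of A]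
  by (intro permutes_compose) auto

lemma cyc_glue_in: "x \<in> C \<Longrightarrow> cyc (glue C \<tau> \<rho>) x = C"
  using cyc_cong[of C "glue C \<tau> \<rho>" \<tau> x] permutes_in_image[OF \<tau>]
    cyc_eq[OF \<tau> finite_subset[OF CA A], of x a] cyc_\<tau>
  by (simp add: glue_def)

lemma cyc_glue_out: "x \<in> A - C \<Longrightarrow> cyc (glue C \<tau> \<rho>) x = cyc \<rho> x"
  using cyc_cong[of "A - C" "glue C \<tau> \<rho>" \<rho> x] permutes_in_image[OF \<rho>]
  by (simp add: glue_def)

lemma cycles_glue: "cyc (glue C \<tau> \<rho>) ` A = insert C (cyc \<rho> ` (A - C))"
proof -
  have "cyc (glue C \<tau> \<rho>) ` A = cyc (glue C \<tau> \<rho>) ` C \<union> cyc (glue C \<tau> \<rho>) ` (A - C)"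
    using CA by auto
  then show ?thesis using cyc_glue_in cyc_glue_out aC by auto
qed

end

lemma permutes_restrict_cyc:
  assumes A: "finite A" and \<sigma>: "\<sigma> permutes A"
  shows "perm_restrict \<sigma> (cyc \<sigma> a) permutes (cyc \<sigma> a)"
proof -
  let ?C = "cyc \<sigma> a"
  have into: "\<sigma> ` ?C \<subseteq> ?C" using cyclic_on_inI[OF cyclic_on_cyc[OF \<sigma> A]] by auto
  have "card (\<sigma> ` ?C) = card ?C" using permutes_inj[OF \<sigma>] by (simp add: card_image inj_on_def inj_def)
  then have "\<sigma> ` ?C = ?C" using card_subset_eq[OF finite_cyc[OF \<sigma> A] into] by simp
  then have "bij_betw \<sigma> ?C ?C" using permutes_inj[OF \<sigma>] by (simp add: bij_betw_def inj_on_def inj_def)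
  then have "bij_betw (perm_restrict \<sigma> ?C) ?C ?C"
    by (rule bij_betw_cong[THEN iffD1, rotated]) (simp add: perm_restrict_def)
  then show ?thesis by (rule bij_imp_permutes) (simp add: perm_restrict_def)
qed

lemma cyc_perm_restrict_cyc:
  assumes A: "finite A" and \<sigma>: "\<sigma> permutes A"
  shows "cyc (perm_restrict \<sigma> (cyc \<sigma> a)) a = cyc \<sigma> a"
  using cyc_cong[of "cyc \<sigma> a" "perm_restrict \<sigma> (cyc \<sigma> a)" \<sigma> a]
    cyclic_on_inI[OF cyclic_on_cyc[OF \<sigma> A]] self_in_cyc[of a \<sigma>]
  by (simp add: perm_restrict_def)

lemma glue_perm_restrict: "\<sigma> permutes A \<Longrightarrow> glue C (perm_restrict \<sigma> C) (perm_restrict \<sigma> (A - C)) = \<sigma>"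
  by (auto simp: glue_def perm_restrict_def fun_eq_iff permutes_not_in)

lemma perm_restrict_glue:
  assumes "\<tau> permutes C" "\<rho> permutes (A - C)"
  shows "perm_restrict (glue C \<tau> \<rho>) C = \<tau>" "perm_restrict (glue C \<tau> \<rho>) (A - C) = \<rho>"
  using assms by (auto simp: perm_restrict_def glue_def fun_eq_iff permutes_not_in)

lemma bij_betw_glue:
  assumes A: "finite A" and CA: "C \<subseteq> A" and aC: "a \<in> C"
  shows "bij_betw (\<lambda>(\<tau>, \<rho>). glue C \<tau> \<rho>)
    ({\<tau>. \<tau> permutes C \<and> cyc \<tau> a = C} \<times> {\<rho>. \<rho> permutes (A - C)})
    {\<sigma>. \<sigma> permutes A \<and> cyc \<sigma> a = C}"
proof (rule bij_betw_byWitness[where f'="\<lambda>\<sigma>. (perm_restrict \<sigma> C, perm_restrict \<sigma> (A - C))"])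
  show "(\<lambda>(\<tau>, \<rho>). glue C \<tau> \<rho>) ` ({\<tau>. \<tau> permutes C \<and> cyc \<tau> a = C} \<times> {\<rho>. \<rho> permutes (A - C)})
      \<subseteq> {\<sigma>. \<sigma> permutes A \<and> cyc \<sigma> a = C}"
    using permutes_glue[OF A CA aC] cyc_glue_in[OF A CA aC _ _ _ aC] by auto
  show "(\<lambda>\<sigma>. (perm_restrict \<sigma> C, perm_restrict \<sigma> (A - C))) ` {\<sigma>. \<sigma> permutes A \<and> cyc \<sigma> a = C}
      \<subseteq> {\<tau>. \<tau> permutes C \<and> cyc \<tau> a = C} \<times> {\<rho>. \<rho> permutes (A - C)}"
    using permutes_restrict_cyc[OF A] cyc_perm_restrict_cyc[OF A]
      perm_restrict_diff_cyclic[OF _ cyclic_on_cyc[OF _ A]] by auto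
qed (use glue_perm_restrict perm_restrict_glue in auto)

definition cycle_weight :: "(nat \<Rightarrow> 'a::comm_semiring_1) \<Rightarrow> (nat \<Rightarrow> nat) \<Rightarrow> nat set \<Rightarrow> 'a" where
  "cycle_weight g \<sigma> A = (\<Prod>C\<in>cyc \<sigma> ` A. g (card C))"

definition cycle_sum :: "(nat \<Rightarrow> 'a::comm_semiring_1) \<Rightarrow> nat set \<Rightarrow> 'a" where
  "cycle_sum g A = (\<Sum>\<sigma>\<in>{\<sigma>. \<sigma> permutes A}. cycle_weight g \<sigma> A)"

definition num_cyclic_perms :: "nat \<Rightarrow> nat set \<Rightarrow> nat" where
  "num_cyclic_perms a C = card {\<tau>. \<tau> permutes C \<and> cyc \<tau> a = C}"

lemma cycle_sum_empty [simp]: "cycle_sum g {} = 1"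
  by (simp add: cycle_sum_def cycle_weight_def)

lemma cycle_sum_1: "finite A \<Longrightarrow> cycle_sum (\<lambda>_. 1::nat) A = fact (card A)"
  by (simp add: cycle_sum_def cycle_weight_def card_permutations)

lemma cycle_sum_decompose:
  assumes A: "finite A" and aA: "a \<in> A"
  shows "cycle_sum g A = (\<Sum>C\<in>{C. a \<in> C \<and> C \<subseteq> A}.
      of_nat (num_cyclic_perms a C) * g (card C) * cycle_sum g (A - C))"
proof -
  let ?P = "{\<sigma>. \<sigma> permutes A}"
  let ?CC = "{C. a \<in> C \<and> C \<subseteq> A}"
  have "finite ?CC" by (rule finite_subset[of _ "Pow A"]) (use A in auto)
  moreover have "cyc \<sigma> a \<in> ?CC" if "\<sigma> \<in> ?P" for \<sigma>
    using that cyc_subset[OF _ A aA] self_in_cyc by blast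
  ultimately have "cycle_sum g A = (\<Sum>C\<in>?CC. \<Sum>\<sigma>\<in>{\<sigma>\<in>?P. cyc \<sigma> a = C}. cycle_weight g \<sigma> A)"
    unfolding cycle_sum_def by (intro sum.group[symmetric]) (use finite_permutations[OF A] in auto)
  also have "\<dots> = (\<Sum>C\<in>?CC. of_nat (num_cyclic_perms a C) * g (card C) * cycle_sum g (A - C))"
  proof (rule sum.cong[OF refl])
    fix C assume "C \<in> ?CC"
    then have CA: "C \<subseteq> A" and aC: "a \<in> C" by auto
    let ?T = "{\<tau>. \<tau> permutes C \<and> cyc \<tau> a = C}"
    let ?R = "{\<rho>. \<rho> permutes (A - C)}"
    have weight: "cycle_weight g (glue C \<tau> \<rho>) A = g (card C) * cycle_weight g \<rho> (A - C)"
      if "\<tau> \<in> ?T" "\<rho> \<in> ?R" for \<tau> \<rho>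
    proof -
      have "C \<notin> cyc \<rho> ` (A - C)" using self_in_cyc[of _ \<rho>] by blast
      then show ?thesis using that A by (simp add: cycle_weight_def cycles_glue[OF A CA aC])
    qed
    have "(\<Sum>\<sigma>\<in>{\<sigma>\<in>?P. cyc \<sigma> a = C}. cycle_weight g \<sigma> A) =
        (\<Sum>(\<tau>, \<rho>)\<in>?T \<times> ?R. cycle_weight g (glue C \<tau> \<rho>) A)"
      using sum.reindex_bij_betw[OF bij_betw_glue[OF A CA aC], of "\<lambda>\<sigma>. cycle_weight g \<sigma> A"]
      by (simp add: case_prod_beta)
    also have "\<dots> = (\<Sum>(\<tau>, \<rho>)\<in>?T \<times> ?R. g (card C) * cycle_weight g \<rho> (A - C))"
    proof (rule sum.cong[OF refl])
      fix x assume "x \<in> ?T \<times> ?R"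
      then obtain \<tau> \<rho> where "x = (\<tau>, \<rho>)" "\<tau> \<in> ?T" "\<rho> \<in> ?R" by blast
      then show "(case x of (\<tau>, \<rho>) \<Rightarrow> cycle_weight g (glue C \<tau> \<rho>) A) =
          (case x of (\<tau>, \<rho>) \<Rightarrow> g (card C) * cycle_weight g \<rho> (A - C))"
        using weight by simp
    qed
    also have "\<dots> = (\<Sum>\<tau>\<in>?T. \<Sum>\<rho>\<in>?R. g (card C) * cycle_weight g \<rho> (A - C))"
      by (rule sum.cartesian_product[symmetric])
    also have "\<dots> = of_nat (num_cyclic_perms a C) * g (card C) * cycle_sum g (A - C)"
      by (simp add: cycle_sum_def num_cyclic_perms_def sum_distrib_left mult.assoc)
    finally show "(\<Sum>\<sigma>\<in>{\<sigma>\<in>?P. cyc \<sigma> a = C}. cycle_weight g \<sigma> A) =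
        of_nat (num_cyclic_perms a C) * g (card C) * cycle_sum g (A - C)" .
  qed
  finally show ?thesis .
qed

lemma sum_Pow_card:
  assumes "finite B"
  shows "(\<Sum>E\<in>Pow B. h (card E)) =
    (\<Sum>j\<in>{0..card B}. of_nat (card B choose j) * (h j :: 'a::comm_semiring_1))"
proof -
  have "(\<Sum>E\<in>Pow B. h (card E)) = (\<Sum>j\<in>{0..card B}. \<Sum>E\<in>{E\<in>Pow B. card E = j}. h (card E))"
    by (rule sum.group[symmetric]) (use assms in \<open>auto intro: card_mono\<close>)
  also have "\<dots> = (\<Sum>j\<in>{0..card B}. of_nat (card B choose j) * h j)"
  proof (rule sum.cong[OF refl])
    fix j
    have "(\<Sum>E\<in>{E\<in>Pow B. card E = j}. h (card E)) = of_nat (card {E\<in>Pow B. card E = j}) * h j"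
      by simp
    also have "{E\<in>Pow B. card E = j} = {E. E \<subseteq> B \<and> card E = j}" by auto
    finally show "(\<Sum>E\<in>{E\<in>Pow B. card E = j}. h (card E)) = of_nat (card B choose j) * h j"
      using n_subsets[OF assms, of j] by simp
  qed
  finally show ?thesis .
qed

lemma sum_subsets_containing:
  assumes A: "finite A" and aA: "a \<in> A"
  shows "(\<Sum>D\<in>{D. a \<in> D \<and> D \<subseteq> A}. f (card D))
       = (\<Sum>k\<in>{1..card A}. of_nat (card A - 1 choose (k - 1)) * (f k :: 'a::comm_semiring_1))"
proof -
  let ?B = "A - {a}"
  have fB: "finite ?B" using A by simp
  have cA: "card A = Suc (card ?B)" using A aA by (metis card_Suc_Diff1)
  have "(\<Sum>D\<in>{D. a \<in> D \<and> D \<subseteq> A}. f (card D)) = (\<Sum>E\<in>Pow ?B. f (card (insert a E)))"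
  proof (rule sum.reindex_bij_witness[where i="insert a" and j="\<lambda>D. D - {a}"])
    fix D assume "D \<in> {D. a \<in> D \<and> D \<subseteq> A}"
    then show "insert a (D - {a}) = D" "D - {a} \<in> Pow ?B" "f (card (insert a (D - {a}))) = f (card D)"
      by (auto simp: insert_absorb)
  next
    fix E assume "E \<in> Pow ?B"
    then show "insert a E - {a} = E" "insert a E \<in> {D. a \<in> D \<and> D \<subseteq> A}" using aA by auto
  qed
  also have "\<dots> = (\<Sum>E\<in>Pow ?B. f (Suc (card E)))"
  proof (rule sum.cong[OF refl])
    fix E assume "E \<in> Pow ?B"
    then have "finite E" "a \<notin> E" using fB finite_subset by auto
    then show "f (card (insert a E)) = f (Suc (card E))" by simp
  qed
  also have "\<dots> = (\<Sum>j\<in>{0..card ?B}. of_nat (card ?B choose j) * f (Suc j))"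
    by (rule sum_Pow_card[OF fB])
  also have "\<dots> = (\<Sum>k\<in>{Suc 0..Suc (card ?B)}. of_nat (card A - 1 choose (k - 1)) * f k)"
    by (subst sum.shift_bounds_cl_Suc_ivl) (simp add: cA)
  finally show ?thesis by (simp add: cA)
qed

lemma binomial_fact_pred:
  assumes "1 \<le> k" "k \<le> n"
  shows "(n - 1 choose (k - 1)) * fact (k - 1) * fact (n - k) = (fact (n - 1) :: nat)"
proof -
  have "fact (k - 1) * fact ((n - 1) - (k - 1)) * (n - 1 choose (k - 1)) = (fact (n - 1) :: nat)"
    by (rule binomial_fact_lemma) (use assms in auto)
  moreover have "(n - 1) - (k - 1) = n - k" using assms by auto
  ultimately show ?thesis by (simp add: ac_simps)
qed

text \<open>Decompose the unweighted cycle sum n! = ((n - 1)! + rest) by the cycle through a; by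
  induction, the same rest appears next to the number of cyclic permutations.\<close>

lemma num_cyclic_perms_eq_fact:
  assumes "finite C" "a \<in> C"
  shows "num_cyclic_perms a C = fact (card C - 1)"
  using assms
proof (induction "card C" arbitrary: C rule: less_induct)
  case less
  let ?n = "card C"
  let ?CC = "{D. a \<in> D \<and> D \<subseteq> C}"
  have fin: "finite ?CC" by (rule finite_subset[of _ "Pow C"]) (use less.prems in auto)
  have C: "C \<in> ?CC" using less.prems by auto
  have n: "1 \<le> ?n" using less.prems by (metis One_nat_def Suc_leI card_gt_0_iff empty_iff)
  define rest where "rest = (\<Sum>D\<in>?CC - {C}. fact (card D - 1) * fact (?n - card D) :: nat)"
  have "fact ?n = cycle_sum (\<lambda>_. 1::nat) C" using cycle_sum_1[OF less.prems(1)] by simp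
  also have "\<dots> = (\<Sum>D\<in>?CC. num_cyclic_perms a D * fact (?n - card D))"
  proof -
    have "cycle_sum (\<lambda>_. 1::nat) (C - D) = fact (?n - card D)" if "D \<in> ?CC" for D
    proof -
      have "finite D" "D \<subseteq> C" using that less.prems(1) finite_subset by auto
      then show ?thesis using cycle_sum_1[of "C - D"] less.prems(1) by (simp add: card_Diff_subset)
    qed
    then show ?thesis by (simp add: cycle_sum_decompose[OF less.prems])
  qed
  also have "\<dots> = num_cyclic_perms a C + rest"
  proof -
    have "num_cyclic_perms a D = fact (card D - 1)" if "D \<in> ?CC - {C}" for D
    proof (rule less.hyps)
      have "D \<subset> C" using that by auto
      then show "card D < card C" "finite D"
        using less.prems(1) psubset_card_mono finite_subset by auto
    qed (use that in auto)
    then show ?thesis by (simp add: sum.remove[OF fin C] rest_def)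
  qed
  finally have "fact ?n = num_cyclic_perms a C + rest" .
  moreover have "fact ?n = fact (?n - 1) + rest"
  proof -
    have "(\<Sum>D\<in>?CC. fact (card D - 1) * fact (?n - card D) :: nat) =
        (\<Sum>k\<in>{1..?n}. of_nat (?n - 1 choose (k - 1)) * (fact (k - 1) * fact (?n - k)))"
      by (rule sum_subsets_containing[OF less.prems])
    also have "\<dots> = (\<Sum>k\<in>{1..?n}. fact (?n - 1))"
      by (intro sum.cong refl) (use binomial_fact_pred in \<open>auto simp: mult.assoc\<close>)
    also have "\<dots> = fact ?n" using n by (simp add: fact_reduce[of ?n])
    finally show ?thesis by (simp add: sum.remove[OF fin C] rest_def)
  qed
  ultimately show ?case by simp
qed

lemma cycle_sum_recurrence_aux:
  assumes A: "finite A" and aA: "a \<in> A"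
    and IH: "\<And>B. finite B \<Longrightarrow> card B < card A \<Longrightarrow> cycle_sum g B = cycle_sum g {..<card B}"
  shows "cycle_sum g A = (\<Sum>k\<in>{1..card A}. of_nat (card A - 1 choose (k - 1)) *
      (of_nat (fact (k - 1)) * g k * cycle_sum g {..<card A - k}))"
proof -
  let ?CC = "{D. a \<in> D \<and> D \<subseteq> A}"
  have "cycle_sum g A = (\<Sum>D\<in>?CC.
      of_nat (num_cyclic_perms a D) * g (card D) * cycle_sum g (A - D))"
    by (rule cycle_sum_decompose[OF A aA])
  also have "\<dots> = (\<Sum>D\<in>?CC.
      of_nat (fact (card D - 1)) * g (card D) * cycle_sum g {..<card A - card D})"
  proof (rule sum.cong[OF refl])
    fix D assume D: "D \<in> ?CC"
    then have fD: "finite D" using A finite_subset by auto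
    then have cd: "card (A - D) = card A - card D" using D by (simp add: card_Diff_subset)
    have "0 < card D" using D fD by (auto simp: card_gt_0_iff)
    moreover have "card D \<le> card A" by (rule card_mono[OF A]) (use D in auto)
    ultimately have "cycle_sum g (A - D) = cycle_sum g {..<card A - card D}"
      using IH[of "A - D"] A cd by simp
    then show "of_nat (num_cyclic_perms a D) * g (card D) * cycle_sum g (A - D) =
        of_nat (fact (card D - 1)) * g (card D) * cycle_sum g {..<card A - card D}"
      using num_cyclic_perms_eq_fact[OF fD] D by simp
  qed
  also have "\<dots> = (\<Sum>k\<in>{1..card A}. of_nat (card A - 1 choose (k - 1)) *
      (of_nat (fact (k - 1)) * g k * cycle_sum g {..<card A - k}))"
    by (rule sum_subsets_containing[OF A aA])
  finally show ?thesis .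
qed

lemma cycle_sum_card: "finite A \<Longrightarrow> cycle_sum g A = cycle_sum g {..<card A}"
proof (induction "card A" arbitrary: A rule: less_induct)
  case less
  show ?case
  proof (cases "A = {}")
    case False
    then obtain a where a: "a \<in> A" by auto
    have IH: "\<And>B. finite B \<Longrightarrow> card B < card A \<Longrightarrow> cycle_sum g B = cycle_sum g {..<card B}"
      using less.hyps by blast
    let ?m = "card {..<card A}"
    have "cycle_sum g {..<card A} = (\<Sum>k\<in>{1..?m}. of_nat (?m - 1 choose (k - 1)) *
        (of_nat (fact (k - 1)) * g k * cycle_sum g {..<?m - k}))"
    proof (rule cycle_sum_recurrence_aux[of "{..<card A}" 0])
      fix B :: "nat set" assume "finite B" "card B < ?m"
      then show "cycle_sum g B = cycle_sum g {..<card B}" using IH[of B] by simp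
    qed (use less.prems False in \<open>simp_all add: card_gt_0_iff\<close>)
    then show ?thesis using cycle_sum_recurrence_aux[OF less.prems a IH] by simp
  qed simp
qed

text \<open>The exponential formula: (n - 1 choose k - 1) (k - 1)! counts the cycles of length k
  through a fixed point.\<close>

lemma cycle_sum_recurrence:
  assumes "0 < n"
  shows "cycle_sum g {..<n} = (\<Sum>k\<in>{1..n}. of_nat (n - 1 choose (k - 1)) *
      (of_nat (fact (k - 1)) * g k * cycle_sum g {..<n - k}))"
proof -
  have "cycle_sum g {..<n} = (\<Sum>k\<in>{1..card {..<n}}. of_nat (card {..<n} - 1 choose (k - 1)) *
      (of_nat (fact (k - 1)) * g k * cycle_sum g {..<card {..<n} - k}))"
    by (rule cycle_sum_recurrence_aux[where a=0]) (auto simp: assms intro: cycle_sum_card)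
  then show ?thesis by simp
qed

section \<open>The series K\<close>

definition odd_psum :: "rat \<Rightarrow> nat \<Rightarrow> symf" where
  "odd_psum c k = (if odd k then sc c * psum k else 0)"

text \<open>By the exponential formula, the coefficient of t^n in exp (c (p_1 t + p_3 t^3/3 + ...));
  K is the case c = 2.\<close>

definition E_coeff :: "rat \<Rightarrow> nat \<Rightarrow> symf" where
  "E_coeff c n = sc (1 / fact n) * cycle_sum (odd_psum c) {..<n}"

lemma E_coeff_0 [simp]: "E_coeff c 0 = 1"
  by (simp add: E_coeff_def)

lemma fact_binomial_pred_ratio:
  assumes "1 \<le> k" "k \<le> n"
  shows "of_nat n * (1 / fact n) * of_nat (n - 1 choose (k - 1)) * of_nat (fact (k - 1)) =
    (1 / fact (n - k) :: rat)"
proof -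
  have e: "of_nat (n - 1 choose (k - 1)) * of_nat (fact (k - 1)) * (fact (n - k) :: rat) = fact (n - 1)"
    using arg_cong[OF binomial_fact_pred[OF assms], of "of_nat :: nat \<Rightarrow> rat"] by (simp add: of_nat_mult)
  have "(fact n :: rat) = of_nat n * fact (n - 1)"
    using assms by (metis fact_reduce le_trans not_one_le_zero gr0I)
  with e assms show ?thesis by (simp add: field_simps)
qed

lemma E_coeff_recurrence:
  assumes n: "0 < n"
  shows "of_nat n * E_coeff c n = (\<Sum>k\<in>{1..n}. odd_psum c k * E_coeff c (n - k))"
proof -
  have "of_nat n * E_coeff c n =
      (\<Sum>k\<in>{1..n}. sc (of_nat n * (1 / fact n)) * (of_nat (n - 1 choose (k - 1)) *
        (of_nat (fact (k - 1)) * odd_psum c k * cycle_sum (odd_psum c) {..<n - k})))"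
    by (simp only: E_coeff_def cycle_sum_recurrence[OF n] sc_of_nat[symmetric] mult.assoc[symmetric]
        sc_mult sum_distrib_left)
  also have "\<dots> = (\<Sum>k\<in>{1..n}. odd_psum c k * E_coeff c (n - k))"
  proof (rule sum.cong[OF refl])
    fix k assume k: "k \<in> {1..n}"
    have "sc (of_nat n * (1 / fact n)) * (of_nat (n - 1 choose (k - 1)) *
          (of_nat (fact (k - 1)) * odd_psum c k * cycle_sum (odd_psum c) {..<n - k}))
        = sc (of_nat n * (1 / fact n) * of_nat (n - 1 choose (k - 1)) * of_nat (fact (k - 1))) *
          (odd_psum c k * cycle_sum (odd_psum c) {..<n - k})"
      by (simp only: sc_of_nat[symmetric] mult.assoc[symmetric] sc_mult)
    also have "\<dots> = odd_psum c k * E_coeff c (n - k)"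
      using fact_binomial_pred_ratio[of k n] k by (simp add: E_coeff_def ac_simps)
    finally show "sc (of_nat n * (1 / fact n)) * (of_nat (n - 1 choose (k - 1)) *
          (of_nat (fact (k - 1)) * odd_psum c k * cycle_sum (odd_psum c) {..<n - k}))
        = odd_psum c k * E_coeff c (n - k)" .
  qed
  finally show ?thesis .
qed

lemma sym_valid_E_coeff: "sym_valid (E_coeff c n)"
proof (induction n rule: less_induct)
  case (less n)
  show ?case
  proof (cases "n = 0")
    case True then show ?thesis by (simp add: sym_valid_def)
  next
    case False
    then have eq: "E_coeff c n = sc (1 / of_nat n) * (\<Sum>k\<in>{1..n}. odd_psum c k * E_coeff c (n - k))"
      using sc_inverse_mult_cancel[of n "E_coeff c n"] by (simp add: E_coeff_recurrence)
    have terms: "sym_valid (odd_psum c k * E_coeff c (n - k))" if "k \<in> {1..n}" for k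
      using that less.IH[of "n - k"]
      by (auto simp: odd_psum_def mult.assoc sym_valid_def[of 0] intro!: sym_valid_sc_mult sym_valid_psum_mult)
    show ?thesis unfolding eq by (intro sym_valid_sc_mult sym_valid_sum terms)
  qed
qed

definition total_degree :: "(nat \<Rightarrow>\<^sub>0 nat) \<Rightarrow> nat" where
  "total_degree \<alpha> = (\<Sum>i\<in>Poly_Mapping.keys \<alpha>. expo \<alpha> i)"

lemma total_degree_minus_single:
  assumes i: "i \<in> Poly_Mapping.keys \<alpha>" and k: "k \<le> expo \<alpha> i"
  shows "total_degree (\<alpha> - Poly_Mapping.single i k) = total_degree \<alpha> - k" "k \<le> total_degree \<alpha>"
proof -
  let ?K = "Poly_Mapping.keys \<alpha>"
  have "expo \<alpha> i \<le> total_degree \<alpha>" unfolding total_degree_def by (rule member_le_sum) (use i in auto)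
  then show "k \<le> total_degree \<alpha>" using k by simp
  have "total_degree (\<alpha> - Poly_Mapping.single i k) = (\<Sum>j\<in>?K. expo (\<alpha> - Poly_Mapping.single i k) j)"
    unfolding total_degree_def using keys_minus_single_subset
    by (intro sum.mono_neutral_left) (auto simp: in_keys_iff)
  also have "\<dots> = (\<Sum>j\<in>?K. expo \<alpha> j - (if i = j then k else 0))"
    by (simp add: lookup_minus_single)
  also have "\<dots> = (\<Sum>j\<in>?K - {i}. expo \<alpha> j) + (expo \<alpha> i - k)"
    using sum.remove[OF finite_keys i, of "\<lambda>j. expo \<alpha> j - (if i = j then k else 0)"]
    by (simp add: add.commute)
  also have "\<dots> = total_degree \<alpha> - k"
    using sum.remove[OF finite_keys i, of "expo \<alpha>"] k by (simp add: total_degree_def)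
  finally show "total_degree (\<alpha> - Poly_Mapping.single i k) = total_degree \<alpha> - k" .
qed

lemma total_degree_eq_0_iff: "total_degree \<alpha> = 0 \<longleftrightarrow> \<alpha> = 0"
  by (auto simp: total_degree_def in_keys_iff poly_mapping_eq_iff fun_eq_iff)

lemma keys_minus_single:
  assumes "0 < k" "k \<le> expo \<alpha> i"
  shows "Poly_Mapping.keys (\<alpha> - Poly_Mapping.single i k) =
    (if expo \<alpha> i = k then Poly_Mapping.keys \<alpha> - {i} else Poly_Mapping.keys \<alpha>)"
  using assms by (auto simp: in_keys_iff lookup_minus_single split: if_splits)

lemma sum_odd_2: "(\<Sum>k\<in>{1..a}. if odd k then 2 else 0 :: rat) = of_nat a + (if odd a then 1 else 0)"
  by (induction a) simp_all

lemma sum_odd_weights: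
  assumes "1 \<le> a"
  shows "(\<Sum>k\<in>{1..a}. if odd k then (if k = a then 1 else 2) else 0 :: rat) = of_nat a"
proof -
  have e: "{1..a} = insert a {1..a - 1}" using assms by auto
  have "(\<Sum>k\<in>{1..a}. if odd k then (if k = a then 1 else 2) else 0 :: rat)
      = (if odd a then 1 else 0) + (\<Sum>k\<in>{1..a - 1}. if odd k then 2 else 0)"
    unfolding e by (subst sum.insert) (auto intro!: sum.cong)
  then show ?thesis using assms sum_odd_2[of "a - 1"] by (cases "odd a") (auto simp: of_nat_diff)
qed

definition K_mexp :: "nat \<Rightarrow> (nat \<Rightarrow>\<^sub>0 nat) \<Rightarrow> rat" where
  "K_mexp n \<alpha> = (if total_degree \<alpha> = n then 2 ^ card (Poly_Mapping.keys \<alpha>) else 0)"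

lemma K_mexp_recurrence_term:
  assumes i: "i \<in> Poly_Mapping.keys \<alpha>" and deg: "total_degree \<alpha> = n"
  shows "(\<Sum>k\<in>{1..n}. if odd k \<and> k \<le> expo \<alpha> i
      then 2 * K_mexp (n - k) (\<alpha> - Poly_Mapping.single i k) else 0)
    = of_nat (expo \<alpha> i) * 2 ^ card (Poly_Mapping.keys \<alpha>)"
proof -
  let ?a = "expo \<alpha> i"
  let ?s = "card (Poly_Mapping.keys \<alpha>)"
  have a: "1 \<le> ?a" using i by (auto simp: in_keys_iff)
  have an: "?a \<le> n" using deg total_degree_minus_single(2)[OF i order.refl] by simp
  have s: "1 \<le> ?s" using i by (metis One_nat_def Suc_leI card_gt_0_iff empty_iff finite_keys)
  have summand: "(if odd k \<and> k \<le> ?a then 2 * K_mexp (n - k) (\<alpha> - Poly_Mapping.single i k) else 0) =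
      (if odd k \<and> k \<le> ?a then 2 ^ ?s * (if k = ?a then 1 else 2) else 0)" if k: "k \<in> {1..n}" for k
  proof (cases "odd k \<and> k \<le> ?a")
    case True
    have "total_degree (\<alpha> - Poly_Mapping.single i k) = n - k"
      using total_degree_minus_single(1)[OF i] True deg by simp
    moreover have "card (Poly_Mapping.keys (\<alpha> - Poly_Mapping.single i k)) =
        (if ?a = k then ?s - 1 else ?s)"
      using keys_minus_single[of k \<alpha> i] True k i by auto
    moreover have "(2::rat) * 2 ^ (?s - 1) = 2 ^ ?s" using s by (metis Suc_diff_le diff_Suc_1 power_Suc)
    ultimately show ?thesis using True by (auto simp: K_mexp_def)
  qed auto
  have "(\<Sum>k\<in>{1..n}. if odd k \<and> k \<le> ?a then 2 * K_mexp (n - k) (\<alpha> - Poly_Mapping.single i k) else 0)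
      = (\<Sum>k\<in>{1..?a}. if odd k \<and> k \<le> ?a then 2 ^ ?s * (if k = ?a then 1 else 2) else 0 :: rat)"
  proof -
    have "(\<Sum>k\<in>{1..n}. if odd k \<and> k \<le> ?a then 2 * K_mexp (n - k) (\<alpha> - Poly_Mapping.single i k) else 0)
        = (\<Sum>k\<in>{1..n}. if odd k \<and> k \<le> ?a then 2 ^ ?s * (if k = ?a then 1 else 2) else 0 :: rat)"
      by (rule sum.cong[OF refl]) (rule summand)
    also have "\<dots> = (\<Sum>k\<in>{1..?a}. if odd k \<and> k \<le> ?a then 2 ^ ?s * (if k = ?a then 1 else 2) else 0)"
      by (rule sum.mono_neutral_right) (use an in auto)
    finally show ?thesis .
  qed
  also have "\<dots> = 2 ^ ?s * (\<Sum>k\<in>{1..?a}. if odd k then (if k = ?a then 1 else 2) else 0 :: rat)"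
    unfolding sum_distrib_left by (rule sum.cong) auto
  also have "\<dots> = 2 ^ ?s * of_nat ?a" using sum_odd_weights[OF a] by simp
  finally show ?thesis by simp
qed

lemma K_mexp_recurrence:
  "(\<Sum>k\<in>{1..n}. if odd k then 2 * (\<Sum>i\<in>{i\<in>Poly_Mapping.keys \<alpha>. k \<le> expo \<alpha> i}.
      K_mexp (n - k) (\<alpha> - Poly_Mapping.single i k)) else 0) = of_nat n * K_mexp n \<alpha>"
proof -
  let ?K = "Poly_Mapping.keys \<alpha>"
  let ?t = "\<lambda>k i. if odd k \<and> k \<le> expo \<alpha> i then 2 * K_mexp (n - k) (\<alpha> - Poly_Mapping.single i k) else 0"
  have "(\<Sum>k\<in>{1..n}. if odd k then 2 * (\<Sum>i\<in>{i\<in>?K. k \<le> expo \<alpha> i}.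
      K_mexp (n - k) (\<alpha> - Poly_Mapping.single i k)) else 0) = (\<Sum>i\<in>?K. \<Sum>k\<in>{1..n}. ?t k i)"
    by (subst sum.swap[symmetric], intro sum.cong refl)
       (simp add: sum.inter_filter sum_distrib_left if_distrib cong: if_cong)
  also have "\<dots> = of_nat n * K_mexp n \<alpha>"
  proof (cases "total_degree \<alpha> = n")
    case False
    have "?t k i = 0" if i: "i \<in> ?K" and k: "k \<in> {1..n}" for i k
    proof -
      have "K_mexp (n - k) (\<alpha> - Poly_Mapping.single i k) = 0" if "k \<le> expo \<alpha> i"
        using total_degree_minus_single[OF i that] k False by (auto simp: K_mexp_def)
      then show ?thesis by auto
    qed
    then show ?thesis using False by (simp add: K_mexp_def)
  next
    case True
    have "(\<Sum>i\<in>?K. \<Sum>k\<in>{1..n}. ?t k i) = (\<Sum>i\<in>?K. of_nat (expo \<alpha> i) * 2 ^ card ?K)"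
      by (intro sum.cong refl K_mexp_recurrence_term True)
    also have "\<dots> = of_nat (total_degree \<alpha>) * 2 ^ card ?K"
      by (simp add: total_degree_def sum_distrib_right)
    finally show ?thesis using True by (simp add: K_mexp_def)
  qed
  finally show ?thesis .
qed

lemma mexp_odd_psum_mult:
  assumes "sym_valid F"
  shows "mexp (odd_psum c k * F) \<alpha> = (if odd k then c * (\<Sum>i\<in>{i\<in>Poly_Mapping.keys \<alpha>. k \<le> expo \<alpha> i}.
      mexp F (\<alpha> - Poly_Mapping.single i k)) else 0)"
  using assms by (simp add: odd_psum_def mult.assoc mexp_sc_mult mexp_psum_mult mexp_0)

lemma mexp_E_coeff_2: "mexp (E_coeff 2 n) \<alpha> = K_mexp n \<alpha>"
proof (induction n arbitrary: \<alpha> rule: less_induct)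
  case (less n)
  show ?case
  proof (cases "n = 0")
    case True
    then show ?thesis by (auto simp: mexp_1 K_mexp_def total_degree_eq_0_iff)
  next
    case False
    then have n: "0 < n" by simp
    have "of_nat n * mexp (E_coeff 2 n) \<alpha> = mexp (of_nat n * E_coeff 2 n) \<alpha>"
      by (simp add: sc_of_nat[symmetric] mexp_sc_mult)
    also have "\<dots> = (\<Sum>k\<in>{1..n}. mexp (odd_psum 2 k * E_coeff 2 (n - k)) \<alpha>)"
      by (simp add: E_coeff_recurrence[OF n] mexp_sum)
    also have "\<dots> = (\<Sum>k\<in>{1..n}. if odd k then 2 * (\<Sum>i\<in>{i\<in>Poly_Mapping.keys \<alpha>. k \<le> expo \<alpha> i}.
        K_mexp (n - k) (\<alpha> - Poly_Mapping.single i k)) else 0)"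
      by (intro sum.cong refl) (simp add: mexp_odd_psum_mult sym_valid_E_coeff less.IH)
    also have "\<dots> = of_nat n * K_mexp n \<alpha>" by (rule K_mexp_recurrence)
    finally show ?thesis using n by simp
  qed
qed

lemma K_coeff_eq_E_coeff: "K_coeff n = E_coeff 2 n"
  unfolding K_coeff_def
proof (rule the_equality)
  show "sym_valid (E_coeff 2 n) \<and> mexp (E_coeff 2 n) = (\<lambda>alpha.
      if (\<Sum>i\<in>Poly_Mapping.keys alpha. Poly_Mapping.lookup alpha i) = n
      then 2 ^ card (Poly_Mapping.keys alpha) else 0)"
    by (auto simp: sym_valid_E_coeff mexp_E_coeff_2 K_mexp_def total_degree_def)
  then show "q = E_coeff 2 n" if "sym_valid q \<and> mexp q = (\<lambda>alpha.
      if (\<Sum>i\<in>Poly_Mapping.keys alpha. Poly_Mapping.lookup alpha i) = n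
      then 2 ^ card (Poly_Mapping.keys alpha) else 0)" for q
    using that by (intro mexp_inject) auto
qed

definition E_series :: "rat \<Rightarrow> symf fps" where
  "E_series c = Abs_fps (E_coeff c)"

definition E_logderiv :: "rat \<Rightarrow> symf fps" where
  "E_logderiv c = Abs_fps (\<lambda>m. odd_psum c (Suc m))"

lemma E_series_nth [simp]: "E_series c $ n = E_coeff c n"
  by (simp add: E_series_def)

lemma E_logderiv_nth [simp]: "E_logderiv c $ n = odd_psum c (Suc n)"
  by (simp add: E_logderiv_def)

lemma fps_deriv_E_series: "fps_deriv (E_series c) = E_logderiv c * E_series c"
proof (rule fps_ext)
  fix m
  have "fps_deriv (E_series c) $ m = (\<Sum>k\<in>{Suc 0..Suc m}. odd_psum c k * E_coeff c (Suc m - k))"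
    using E_coeff_recurrence[of "Suc m" c] by simp
  also have "\<dots> = (E_logderiv c * E_series c) $ m"
    by (subst sum.shift_bounds_cl_Suc_ivl) (simp add: fps_mult_nth)
  finally show "fps_deriv (E_series c) $ m = (E_logderiv c * E_series c) $ m" .
qed

lemma fps_linear_ode_unique:
  fixes A B L :: "symf fps"
  assumes "fps_deriv A = L * A" "fps_deriv B = L * B" "A $ 0 = B $ 0"
  shows "A = B"
proof (rule fps_ext)
  fix n show "A $ n = B $ n"
  proof (induction n rule: less_induct)
    case (less n)
    show ?case
    proof (cases n)
      case (Suc m)
      have "of_nat (Suc m) * A $ Suc m = (L * A) $ m"
        using arg_cong[OF assms(1), of "\<lambda>f. f $ m"] by simp
      also have "\<dots> = (L * B) $ m"
        unfolding fps_mult_nth by (rule sum.cong[OF refl]) (use less Suc in auto)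
      also have "\<dots> = of_nat (Suc m) * B $ Suc m"
        using arg_cong[OF assms(2), of "\<lambda>f. f $ m"] by simp
      finally show ?thesis using of_nat_mult_symf_cancel[of "Suc m"] Suc by blast
    qed (use assms(3) in simp)
  qed
qed

lemma odd_psum_add: "odd_psum (c + d) k = odd_psum c k + odd_psum d k"
  by (simp add: odd_psum_def sc_add distrib_right)

lemma E_logderiv_add: "E_logderiv (c + d) = E_logderiv c + E_logderiv d"
  by (rule fps_ext) (simp add: odd_psum_add)

lemma E_logderiv_uminus: "E_logderiv (- c) = - E_logderiv c"
  by (rule fps_ext) (simp add: odd_psum_def sc_uminus)

lemma E_series_mult: "E_series c * E_series d = E_series (c + d)"
proof (rule fps_linear_ode_unique[where L="E_logderiv (c + d)"])
  show "fps_deriv (E_series c * E_series d) = E_logderiv (c + d) * (E_series c * E_series d)"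
    by (simp add: fps_deriv_E_series E_logderiv_add algebra_simps)
qed (simp_all add: fps_deriv_E_series)

lemma E_series_0: "E_series 0 = 1"
proof -
  have L0: "E_logderiv 0 = 0" by (rule fps_ext) (simp add: odd_psum_def)
  show ?thesis
    by (rule fps_linear_ode_unique[where L="E_logderiv 0"]) (simp_all add: fps_deriv_E_series L0)
qed

lemma E_series_power: "E_series c ^ m = E_series (of_nat m * c)"
  by (induction m) (simp_all add: E_series_0 E_series_mult algebra_simps)

lemma fps_compose_uminus_X_nth: "(A oo - fps_X) $ n = (- 1) ^ n * (A $ n :: symf)"
proof -
  have X: "((- fps_X :: symf fps) ^ i) $ n = (if i = n then (- 1) ^ n else 0)" for i
  proof (induction i arbitrary: n)
    case (Suc i)
    have "(- fps_X :: symf fps) ^ Suc i = - (fps_X * (- fps_X) ^ i)" by simp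
    then show ?case using Suc by (cases n) auto
  qed simp
  have "(A oo - fps_X) $ n = (\<Sum>i\<in>{0..n}. A $ i * (if i = n then (- 1) ^ n else 0))"
    by (simp add: fps_compose_nth X)
  also have "\<dots> = (- 1) ^ n * A $ n"
    by (simp add: if_distrib[of "(*) _"] sum.delta' mult.commute cong: if_cong)
  finally show ?thesis .
qed

lemma E_logderiv_compose_uminus_X: "E_logderiv c oo - fps_X = E_logderiv c"
proof (rule fps_ext)
  fix n
  have "(- 1) ^ n * odd_psum c (Suc n) = odd_psum c (Suc n)"
    by (cases "even n") (simp_all add: odd_psum_def)
  then show "(E_logderiv c oo - fps_X) $ n = E_logderiv c $ n"
    by (simp add: fps_compose_uminus_X_nth)
qed

text \<open>Replacing t by -t flips the sign of the odd power sums.\<close>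

lemma E_series_compose_uminus_X: "E_series c oo - fps_X = E_series (- c)"
proof (rule fps_linear_ode_unique[where L="E_logderiv (- c)"])
  have X0: "(- fps_X :: symf fps) $ 0 = 0" by simp
  have "fps_deriv (E_series c oo - fps_X) = (fps_deriv (E_series c) oo - fps_X) * fps_deriv (- fps_X)"
    by (rule fps_compose_deriv[OF X0])
  also have "\<dots> = - ((E_logderiv c oo - fps_X) * (E_series c oo - fps_X))"
    by (simp add: fps_deriv_E_series fps_compose_mult_distrib[OF X0])
  also have "\<dots> = E_logderiv (- c) * (E_series c oo - fps_X)"
    by (simp add: E_logderiv_compose_uminus_X E_logderiv_uminus)
  finally show "fps_deriv (E_series c oo - fps_X) = E_logderiv (- c) * (E_series c oo - fps_X)" .
qed (simp_all add: fps_deriv_E_series)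

unbundle fps_syntax

section \<open>Lagrange inversion\<close>

lemma fps_compose_mult_nth:
  fixes A G B :: "'a::comm_ring_1 fps"
  assumes G0: "G $ 0 = 0"
  shows "((A oo G) * B) $ m = (\<Sum>j\<in>{0..m}. A $ j * (G ^ j * B) $ m)"
proof -
  have "((A oo G) * B) $ m = (\<Sum>i\<in>{0..m}. (\<Sum>j\<in>{0..i}. A $ j * (G ^ j) $ i) * B $ (m - i))"
    by (simp add: fps_mult_nth fps_compose_nth)
  also have "\<dots> = (\<Sum>i\<in>{0..m}. \<Sum>j\<in>{0..m}. A $ j * ((G ^ j) $ i * B $ (m - i)))"
  proof (rule sum.cong[OF refl])
    fix i assume i: "i \<in> {0..m}"
    have "(\<Sum>j\<in>{0..i}. A $ j * (G ^ j) $ i) = (\<Sum>j\<in>{0..m}. A $ j * (G ^ j) $ i)"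
      by (rule sum.mono_neutral_left) (use i startsby_zero_power_prefix[OF G0] in auto)
    then show "(\<Sum>j\<in>{0..i}. A $ j * (G ^ j) $ i) * B $ (m - i) =
        (\<Sum>j\<in>{0..m}. A $ j * ((G ^ j) $ i * B $ (m - i)))"
      by (simp add: sum_distrib_right mult.assoc)
  qed
  also have "\<dots> = (\<Sum>j\<in>{0..m}. A $ j * (G ^ j * B) $ m)"
    by (subst sum.swap) (simp add: fps_mult_nth sum_distrib_left)
  finally show ?thesis .
qed

lemma power_X_mult_inverse:
  fixes \<phi> \<psi> :: "'a::comm_ring_1 fps"
  assumes "\<phi> * \<psi> = 1" "j \<le> n"
  shows "(fps_X * \<psi>) ^ j * \<phi> ^ n = fps_X ^ j * \<phi> ^ (n - j)"
proof -
  have "\<phi> ^ n = \<phi> ^ j * \<phi> ^ (n - j)" using assms(2) by (simp flip: power_add)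
  then have "(fps_X * \<psi>) ^ j * \<phi> ^ n = fps_X ^ j * (\<phi> * \<psi>) ^ j * \<phi> ^ (n - j)"
    by (simp add: power_mult_distrib algebra_simps)
  then show ?thesis using assms(1) by simp
qed

lemma fps_power_mult_deriv_nth:
  fixes \<phi> :: "symf fps"
  shows "(\<phi> ^ q * fps_deriv \<phi>) $ q = (\<phi> ^ Suc q) $ Suc q"
proof -
  have "of_nat (Suc q) * (\<phi> ^ q * fps_deriv \<phi>) $ q = (of_nat (Suc q) * (\<phi> ^ q * fps_deriv \<phi>)) $ q"
    by (simp flip: fps_of_nat)
  also have "\<dots> = fps_deriv (\<phi> ^ Suc q) $ q"
  proof -
    have "fps_deriv (\<phi> ^ Suc q) = of_nat (Suc q) * fps_deriv \<phi> * \<phi> ^ q"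
      by (metis fps_deriv_power' diff_Suc_1)
    then show ?thesis by (simp only: ac_simps)
  qed
  also have "\<dots> = of_nat (Suc q) * (\<phi> ^ Suc q) $ Suc q"
    by (simp only: fps_deriv_nth Suc_eq_plus1)
  finally show ?thesis using of_nat_mult_symf_cancel[of "Suc q"] by blast
qed

lemma lagrange_inversion_residue:
  fixes \<phi> \<psi> :: "symf fps"
  assumes inv: "\<phi> * \<psi> = 1"
  shows "(\<phi> ^ Suc p * fps_deriv (fps_X * \<psi>)) $ p = (if p = 0 then 1 else 0)"
proof -
  have "\<phi> ^ Suc p * \<psi> = \<phi> ^ p" using inv by (simp add: power_Suc2 mult.assoc)
  then have split: "\<phi> ^ Suc p * fps_deriv (fps_X * \<psi>) = \<phi> ^ p + fps_X * (\<phi> ^ Suc p * fps_deriv \<psi>)"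
    by (simp add: distrib_left mult.left_commute)
  show ?thesis
  proof (cases p)
    case 0
    then show ?thesis using arg_cong[OF inv, of "\<lambda>f. f $ 0"] by (simp add: split)
  next
    case (Suc q)
    have deriv: "\<phi> * fps_deriv \<psi> = - (fps_deriv \<phi> * \<psi>)"
      using arg_cong[OF inv, of fps_deriv] by (simp add: eq_neg_iff_add_eq_0 add.commute)
    have "\<phi> ^ Suc p * fps_deriv \<psi> = \<phi> ^ Suc q * (\<phi> * fps_deriv \<psi>)"
      by (simp add: Suc mult_ac)
    also have "\<dots> = - (\<phi> ^ q * fps_deriv \<phi> * (\<phi> * \<psi>))"
      by (simp add: deriv mult_ac)
    finally have "\<phi> ^ Suc p * fps_deriv \<psi> = - (\<phi> ^ q * fps_deriv \<phi>)" using inv by simp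
    then have "(\<phi> ^ Suc p * fps_deriv (fps_X * \<psi>)) $ p =
        (\<phi> ^ Suc q) $ Suc q - (\<phi> ^ q * fps_deriv \<phi>) $ q"
      by (simp only: split fps_add_nth) (simp add: Suc)
    then show ?thesis using fps_power_mult_deriv_nth[of \<phi> q] by (simp add: Suc)
  qed
qed

lemma lagrange_inversion:
  fixes \<phi> \<psi> H :: "symf fps"
  assumes inv: "\<phi> * \<psi> = 1" and H: "H oo (fps_X * \<psi>) = fps_X"
  shows "of_nat (Suc m) * H $ Suc m = (\<phi> ^ Suc m) $ m"
proof -
  define G where "G = fps_X * \<psi>"
  have G0: "G $ 0 = 0" by (simp add: G_def)
  have "fps_deriv (H oo G) = 1" using H by (simp add: G_def)
  then have dd: "(fps_deriv H oo G) * fps_deriv G = 1" using fps_compose_deriv[OF G0, of H] by simp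
  have "\<phi> ^ Suc m = ((fps_deriv H oo G) * fps_deriv G) * \<phi> ^ Suc m" by (simp only: dd mult_1_left)
  then have "(\<phi> ^ Suc m) $ m = ((fps_deriv H oo G) * (fps_deriv G * \<phi> ^ Suc m)) $ m"
    by (simp only: mult.assoc)
  also have "\<dots> = (\<Sum>j\<in>{0..m}. fps_deriv H $ j * (G ^ j * (fps_deriv G * \<phi> ^ Suc m)) $ m)"
    by (rule fps_compose_mult_nth[OF G0])
  also have "\<dots> = (\<Sum>j\<in>{0..m}. fps_deriv H $ j * (if j = m then 1 else 0))"
  proof (rule sum.cong[OF refl])
    fix j assume j: "j \<in> {0..m}"
    have pow: "G ^ j * \<phi> ^ Suc m = fps_X ^ j * \<phi> ^ Suc (m - j)"
      unfolding G_def using power_X_mult_inverse[OF inv, of j "Suc m"] j by (simp add: Suc_diff_le)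
    have "G ^ j * (fps_deriv G * \<phi> ^ Suc m) = fps_X ^ j * (\<phi> ^ Suc (m - j) * fps_deriv G)"
    proof -
      have "G ^ j * (fps_deriv G * \<phi> ^ Suc m) = (G ^ j * \<phi> ^ Suc m) * fps_deriv G"
        by (simp only: ac_simps)
      then show ?thesis by (simp only: pow mult.assoc)
    qed
    then have "(G ^ j * (fps_deriv G * \<phi> ^ Suc m)) $ m =
        (fps_X ^ j * (\<phi> ^ Suc (m - j) * fps_deriv G)) $ m"
      by (rule arg_cong[where f="\<lambda>x. x $ m"])
    also have "\<dots> = (\<phi> ^ Suc (m - j) * fps_deriv G) $ (m - j)"
      using j by (simp only: fps_X_power_mult_nth) simp
    also have "\<dots> = (if j = m then 1 else 0)"
      unfolding G_def using lagrange_inversion_residue[OF inv, of "m - j"] j by auto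
    finally show "fps_deriv H $ j * (G ^ j * (fps_deriv G * \<phi> ^ Suc m)) $ m =
        fps_deriv H $ j * (if j = m then 1 else 0)" by simp
  qed
  also have "\<dots> = of_nat (Suc m) * H $ Suc m"
    by (simp add: if_distrib[of "(*) _"] cong: if_cong)
  finally show ?thesis by simp
qed

function left_inverse_coeff :: "'a::comm_ring_1 fps \<Rightarrow> nat \<Rightarrow> 'a" where
  "left_inverse_coeff G n = (if n = 0 then 0 else
     (if n = 1 then 1 else 0) - (\<Sum>j<n. left_inverse_coeff G j * (G ^ j) $ n))"
  by auto
termination by (relation "measure snd") auto

lemma left_inverse_exists:
  fixes G :: "'a::comm_ring_1 fps"
  assumes G0: "G $ 0 = 0" and G1: "G $ 1 = 1"
  shows "\<exists>H. H $ 0 = 0 \<and> H oo G = fps_X"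
proof (intro exI conjI)
  define H where "H = Abs_fps (left_inverse_coeff G)"
  show "H $ 0 = 0" by (simp add: H_def)
  show "H oo G = fps_X"
  proof (rule fps_ext)
    fix n
    show "(H oo G) $ n = fps_X $ n"
    proof (cases "n = 0")
      case False
      have "(H oo G) $ n =
          (\<Sum>j\<in>{0..<n}. left_inverse_coeff G j * (G ^ j) $ n) + left_inverse_coeff G n * (G ^ n) $ n"
        by (simp add: fps_compose_nth H_def atLeastLessThanSuc_atLeastAtMost[symmetric])
      moreover have "(G ^ n) $ n = 1" using startsby_zero_power_nth_same[OF G0, of n] G1 by simp
      ultimately show ?thesis using False by (simp add: atLeast0LessThan fps_X_def)
    qed (simp add: H_def)
  qed
qed

text \<open>A left inverse of a series without constant term and with linear coefficient 1 is also a
  right inverse: it has a left inverse of its own, which must then be the original series.\<close>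

lemma fps_left_inverse_imp_right_inverse:
  fixes F G :: "'a::idom fps"
  assumes F0: "F $ 0 = 0" and F1: "F $ 1 = 1" and G0: "G $ 0 = 0" and FG: "F oo G = fps_X"
  shows "G oo F = fps_X"
proof -
  obtain M where M0: "M $ 0 = 0" and MF: "M oo F = fps_X" using left_inverse_exists[OF F0 F1] by blast
  have "G = (M oo F) oo G" by (simp add: MF G0)
  also have "\<dots> = M oo (F oo G)" by (rule fps_compose_assoc[symmetric, OF G0 F0])
  also have "\<dots> = M" by (simp add: FG)
  finally show ?thesis using MF by simp
qed

section \<open>Parking functions fixed by a permutation\<close>

lemma sorted_nth_le_iff_counts:
  assumes s: "sorted xs" and n: "length xs = n"
  shows "(\<forall>i<n. xs ! i \<le> i + 1) \<longleftrightarrow> (\<forall>j\<in>{1..n}. j \<le> card {i. i < n \<and> xs ! i \<le> j})"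
proof
  assume H: "\<forall>i<n. xs ! i \<le> i + 1"
  show "\<forall>j\<in>{1..n}. j \<le> card {i. i < n \<and> xs ! i \<le> j}"
  proof
    fix j assume j: "j \<in> {1..n}"
    have "{..<j} \<subseteq> {i. i < n \<and> xs ! i \<le> j}"
    proof
      fix i assume i: "i \<in> {..<j}"
      then have "xs ! i \<le> xs ! (j - 1)" using s j n by (intro sorted_nth_mono) auto
      also have "\<dots> \<le> j" using H[rule_format, of "j - 1"] j by auto
      finally show "i \<in> {i. i < n \<and> xs ! i \<le> j}" using i j by auto
    qed
    then show "j \<le> card {i. i < n \<and> xs ! i \<le> j}"
      using card_mono[of "{i. i < n \<and> xs ! i \<le> j}" "{..<j}"] by auto
  qed
next
  assume H: "\<forall>j\<in>{1..n}. j \<le> card {i. i < n \<and> xs ! i \<le> j}"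
  show "\<forall>i<n. xs ! i \<le> i + 1"
  proof (intro allI impI, rule ccontr)
    fix i assume i: "i < n" and c: "\<not> xs ! i \<le> i + 1"
    have "{i'. i' < n \<and> xs ! i' \<le> i + 1} \<subseteq> {..<i}"
    proof
      fix i' assume i': "i' \<in> {i'. i' < n \<and> xs ! i' \<le> i + 1}"
      show "i' \<in> {..<i}"
      proof (rule ccontr)
        assume "i' \<notin> {..<i}"
        then have "xs ! i \<le> xs ! i'" using s i' n by (intro sorted_nth_mono) auto
        then show False using c i' by auto
      qed
    qed
    then have "card {i'. i' < n \<and> xs ! i' \<le> i + 1} \<le> i" using card_mono[of "{..<i}"] by fastforce
    moreover have "i + 1 \<le> card {i'. i' < n \<and> xs ! i' \<le> i + 1}" using H i by auto
    ultimately show False by simp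
  qed
qed

lemma parking_iff_counts:
  "a \<in> parking n \<longleftrightarrow>
     length a = n \<and> (\<forall>x\<in>set a. 0 < x) \<and> (\<forall>j\<in>{1..n}. j \<le> card {i. i < n \<and> a ! i \<le> j})"
proof -
  have "length (filter (\<lambda>x. x \<le> j) (sort a)) = length (filter (\<lambda>x. x \<le> j) a)" for j
    by (metis mset_filter mset_sort size_mset)
  then have "card {i. i < length a \<and> sort a ! i \<le> j} = card {i. i < length a \<and> a ! i \<le> j}" for j
    by (simp add: length_filter_conv_card)
  then show ?thesis
    unfolding parking_def using sorted_nth_le_iff_counts[of "sort a" n] by auto
qed

lemma parking_elem_bounds: "a \<in> parking n \<Longrightarrow> x \<in> set a \<Longrightarrow> 0 < x \<and> x \<le> n"
proof -
  assume a: "a \<in> parking n" and x: "x \<in> set a"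
  then have len: "length a = n" and pos: "\<forall>x\<in>set a. 0 < x" and so: "\<forall>i<n. sort a ! i \<le> i + 1"
    by (auto simp: parking_def)
  have "x \<in> set (sort a)" using x by simp
  then obtain i where "i < n" "sort a ! i = x" using len by (metis in_set_conv_nth length_sort)
  then show ?thesis using so pos x by fastforce
qed

text \<open>For a weakly increasing step function c with c 0 = 0 and c m = n
  from m = n + 1 on, the cyclic rotation by s satisfies the parking condition iff s is the first
  position where c m - m attains its minimum over {..n}.\<close>

definition cyclic_parking_cond :: "(nat \<Rightarrow> nat) \<Rightarrow> nat \<Rightarrow> nat \<Rightarrow> bool" where
  "cyclic_parking_cond c n s \<longleftrightarrow> (\<forall>j\<in>{1..n}. j \<le> c (s + j) - c s + c (s + j - Suc n))"

definition first_min :: "(nat \<Rightarrow> int) \<Rightarrow> nat \<Rightarrow> nat \<Rightarrow> bool" where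
  "first_min D N s \<longleftrightarrow> (\<forall>m<s. D s < D m) \<and> (\<forall>m. s < m \<and> m < N \<longrightarrow> D s \<le> D m)"

lemma ex1_first_min:
  assumes "0 < N"
  shows "\<exists>!s. s < N \<and> first_min D N s"
proof -
  define \<mu> where "\<mu> = Min (D ` {..<N})"
  have "\<mu> \<in> D ` {..<N}" unfolding \<mu>_def by (rule Min_in) (use assms in auto)
  then have ex: "\<exists>s. s < N \<and> D s = \<mu>" by auto
  have \<mu>_le: "\<mu> \<le> D m" if "m < N" for m unfolding \<mu>_def using that by (intro Min_le) auto
  define s0 where "s0 = (LEAST s. s < N \<and> D s = \<mu>)"
  have s0: "s0 < N \<and> D s0 = \<mu>" unfolding s0_def by (rule LeastI_ex[OF ex])
  have "first_min D N s0" unfolding first_min_def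
  proof (intro conjI allI impI)
    fix m assume m: "m < s0"
    then have "D m \<noteq> \<mu>" using not_less_Least[of m "\<lambda>s. s < N \<and> D s = \<mu>"] s0 by (auto simp: s0_def)
    then show "D s0 < D m" using \<mu>_le[of m] s0 m by simp
  qed (use \<mu>_le s0 in simp)
  moreover have "s = s'" if "first_min D N s" "s < N" "first_min D N s'" "s' < N" for s s'
    using that by (auto simp: first_min_def) (metis linorder_neqE_nat not_le)
  ultimately show ?thesis using s0 by blast
qed

lemma cyclic_parking_cond_iff_first_min:
  fixes c :: "nat \<Rightarrow> nat"
  assumes mono: "mono c" and c0: "c 0 = 0" and cN: "\<And>m. Suc n \<le> m \<Longrightarrow> c m = n"
    and s: "s < Suc n"
  shows "cyclic_parking_cond c n s \<longleftrightarrow> first_min (\<lambda>m. int (c m) - int m) (Suc n) s"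
proof
  assume C: "cyclic_parking_cond c n s"
  have Cj: "int j \<le> int (c (s + j)) - int (c s) + int (c (s + j - Suc n))" if "1 \<le> j" "j \<le> n" for j
  proof -
    have "j \<le> c (s + j) - c s + c (s + j - Suc n)" using C that by (auto simp: cyclic_parking_cond_def)
    moreover have "c s \<le> c (s + j)" using monoD[OF mono, of s "s + j"] by simp
    ultimately show ?thesis by linarith
  qed
  show "first_min (\<lambda>m. int (c m) - int m) (Suc n) s" unfolding first_min_def
  proof (intro conjI allI impI)
    fix m assume m: "m < s"
    have "int (m + Suc n - s) \<le> int (c (s + (m + Suc n - s))) - int (c s) + int (c m)"
      using Cj[of "m + Suc n - s"] m s by (cases m) (auto simp: c0)
    moreover have "c (s + (m + Suc n - s)) = n" using cN m s by simp
    ultimately show "int (c s) - int s < int (c m) - int m" using m s by (simp add: of_nat_diff)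
  next
    fix m assume m: "s < m \<and> m < Suc n"
    have "int (m - s) \<le> int (c (s + (m - s))) - int (c s) + int (c (s + (m - s) - Suc n))"
      using Cj[of "m - s"] m by auto
    then show "int (c s) - int s \<le> int (c m) - int m" using m c0 by (simp add: of_nat_diff)
  qed
next
  assume F: "first_min (\<lambda>m. int (c m) - int m) (Suc n) s"
  show "cyclic_parking_cond c n s" unfolding cyclic_parking_cond_def
  proof
    fix j assume j: "j \<in> {1..n}"
    have cs: "c s \<le> c (s + j)" using monoD[OF mono] by simp
    show "j \<le> c (s + j) - c s + c (s + j - Suc n)"
    proof (cases "s + j < Suc n")
      case True
      then have "int (c s) - int s \<le> int (c (s + j)) - int (s + j)"
      proof -
        have "s < s + j" using j by simp
        with True F show ?thesis unfolding first_min_def by blast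
      qed
      moreover have "s + j - Suc n = 0" using True by simp
      ultimately show ?thesis using cs c0 by simp
    next
      case False
      then have "s + j - Suc n < s" "c (s + j) = n" using j cN by auto
      then show ?thesis using F False cs unfolding first_min_def by force
    qed
  qed
qed

lemma cycle_lemma:
  fixes c :: "nat \<Rightarrow> nat"
  assumes "mono c" "c 0 = 0" "\<And>m. Suc n \<le> m \<Longrightarrow> c m = n"
  shows "\<exists>!s. s < Suc n \<and> cyclic_parking_cond c n s"
  using ex1_first_min[of "Suc n" "\<lambda>m. int (c m) - int m"] cyclic_parking_cond_iff_first_min[OF assms]
  by auto

text \<open>Words have values in {0..n}; shift_values n s rotates them by -s modulo n + 1 and moves
  them into {1..n + 1}.\<close>

definition shift_values :: "nat \<Rightarrow> nat \<Rightarrow> nat list \<Rightarrow> nat list" where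
  "shift_values n s b = map (\<lambda>v. Suc ((v + Suc n - s) mod Suc n)) b"
definition unshift_values :: "nat \<Rightarrow> nat \<Rightarrow> nat list \<Rightarrow> nat list" where
  "unshift_values n s a = map (\<lambda>x. (x - 1 + s) mod Suc n) a"
definition count_below :: "nat \<Rightarrow> nat list \<Rightarrow> nat \<Rightarrow> nat" where
  "count_below n b m = card {i. i < n \<and> b ! i < m}"

lemma shift_value_le_iff:
  assumes v: "v < Suc n" and s: "s < Suc n" and j: "j \<le> n"
  shows "Suc ((v + Suc n - s) mod Suc n) \<le> j \<longleftrightarrow> (s \<le> v \<and> v < s + j) \<or> v < s + j - Suc n"
proof (cases "s \<le> v")
  case True
  have e: "v + Suc n - s = v - s + Suc n" using True by arith
  have "(v + Suc n - s) mod Suc n = (v - s + Suc n) mod Suc n" by (simp only: e)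
  also have "\<dots> = (v - s) mod Suc n" by (rule mod_add_self2)
  also have "\<dots> = v - s" using v by simp
  finally have m: "(v + Suc n - s) mod Suc n = v - s" .
  show ?thesis unfolding m using True j s by arith
next
  case False
  have m: "(v + Suc n - s) mod Suc n = v + Suc n - s" using False by simp
  show ?thesis unfolding m using False j s by arith
qed

lemma card_shift_values_le:
  assumes len: "length b = n" and vals: "\<forall>v\<in>set b. v < Suc n" and s: "s < Suc n" and j: "j \<le> n"
  shows "card {i. i < n \<and> shift_values n s b ! i \<le> j} =
    count_below n b (s + j) - count_below n b s + count_below n b (s + j - Suc n)"
proof -
  let ?below = "\<lambda>m. {i. i < n \<and> b ! i < m}"
  have wrap: "x < s" if "x < s + j - Suc n" for x using s j that by arith
  have "shift_values n s b ! i \<le> j \<longleftrightarrow> (s \<le> b ! i \<and> b ! i < s + j) \<or> b ! i < s + j - Suc n"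
    if i: "i < n" for i
    using shift_value_le_iff[of "b ! i" n s j] nth_mem[of i b] i len vals s j
    by (simp add: shift_values_def)
  then have eq: "{i. i < n \<and> shift_values n s b ! i \<le> j} =
      (?below (s + j) - ?below s) \<union> ?below (s + j - Suc n)"
    using wrap by auto
  have "card {i. i < n \<and> shift_values n s b ! i \<le> j} =
      card (?below (s + j) - ?below s) + card (?below (s + j - Suc n))"
    unfolding eq by (rule card_Un_disjoint) (auto dest: wrap)
  also have "card (?below (s + j) - ?below s) = count_below n b (s + j) - count_below n b s"
    unfolding count_below_def by (rule card_Diff_subset) auto
  finally show ?thesis by (simp add: count_below_def)
qed

lemma shift_values_parking_iff:
  assumes len: "length b = n" and vals: "\<forall>v\<in>set b. v < Suc n" and s: "s < Suc n"
  shows "shift_values n s b \<in> parking n \<longleftrightarrow> cyclic_parking_cond (count_below n b) n s"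
  unfolding parking_iff_counts cyclic_parking_cond_def using card_shift_values_le[OF len vals s] len by (auto simp: shift_values_def)

lemma mono_count_below: "mono (count_below n b)"
  unfolding count_below_def by (intro monoI card_mono) auto

lemma count_below_0: "count_below n b 0 = 0"
  by (simp add: count_below_def)

lemma count_below_eq:
  assumes len: "length b = n" and vals: "\<forall>v\<in>set b. v < Suc n" and m: "Suc n \<le> m"
  shows "count_below n b m = n"
proof -
  have "b ! i < m" if "i < n" for i
    using nth_mem[of i b] that len vals m by fastforce
  then have "{i. i < n \<and> b ! i < m} = {..<n}" by auto
  then show ?thesis by (simp add: count_below_def)
qed

lemma ex1_shift_values_parking:
  assumes len: "length b = n" and vals: "\<forall>v\<in>set b. v < Suc n"
  shows "\<exists>!s. s < Suc n \<and> shift_values n s b \<in> parking n"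
proof -
  have "\<exists>!s. s < Suc n \<and> cyclic_parking_cond (count_below n b) n s"
    by (rule cycle_lemma[OF mono_count_below count_below_0 count_below_eq[OF len vals]])
  then show ?thesis using shift_values_parking_iff[OF len vals] by metis
qed

lemma shift_unshift_value:
  assumes "1 \<le> x" "x \<le> n" "s < Suc n"
  shows "Suc (((x - 1 + s) mod Suc n + Suc n - s) mod Suc n) = x"
proof (cases "x - 1 + s < Suc n")
  case True
  then have "(x - 1 + s) mod Suc n + Suc n - s = (x - 1) + Suc n" by simp
  moreover have "((x - 1) + Suc n) mod Suc n = x - 1" by (simp only: mod_add_self2) (use assms in simp)
  ultimately show ?thesis using assms by simp
next
  case False
  then have "(x - 1 + s) mod Suc n = x - 1 + s - Suc n" using assms by (simp add: le_mod_geq)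
  then have "(x - 1 + s) mod Suc n + Suc n - s = x - 1" using False by simp
  then show ?thesis using assms by simp
qed

lemma unshift_shift_value:
  assumes "v < Suc n" "s < Suc n"
  shows "(Suc ((v + Suc n - s) mod Suc n) - 1 + s) mod Suc n = v"
proof (cases "s \<le> v")
  case True
  have e: "v + Suc n - s = v - s + Suc n" using True by arith
  have "(v + Suc n - s) mod Suc n = (v - s + Suc n) mod Suc n" by (simp only: e)
  also have "\<dots> = (v - s) mod Suc n" by (rule mod_add_self2)
  also have "\<dots> = v - s" using assms by simp
  finally have m: "(v + Suc n - s) mod Suc n = v - s" .
  have "Suc (v - s) - 1 + s = v" using True by arith
  then show ?thesis unfolding m using assms by simp
next
  case False
  have m: "(v + Suc n - s) mod Suc n = v + Suc n - s" using False by simp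
  have e: "Suc (v + Suc n - s) - 1 + s = v + Suc n" using False assms by arith
  have "(v + Suc n) mod Suc n = v" by (simp only: mod_add_self2) (use assms in simp)
  then show ?thesis unfolding m e .
qed

lemma shift_unshift_values:
  assumes "\<forall>x\<in>set a. 1 \<le> x \<and> x \<le> n" "s < Suc n"
  shows "shift_values n s (unshift_values n s a) = a"
  unfolding shift_values_def unshift_values_def map_map
proof (rule map_idI)
  fix x assume "x \<in> set a"
  then show "((\<lambda>v. Suc ((v + Suc n - s) mod Suc n)) \<circ> (\<lambda>x. (x - 1 + s) mod Suc n)) x = x"
    unfolding comp_def using assms by (intro shift_unshift_value) auto
qed

lemma unshift_shift_values:
  assumes "\<forall>v\<in>set b. v < Suc n" "s < Suc n"
  shows "unshift_values n s (shift_values n s b) = b"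
  unfolding shift_values_def unshift_values_def map_map
proof (rule map_idI)
  fix x assume "x \<in> set b"
  then show "((\<lambda>x. (x - 1 + s) mod Suc n) \<circ> (\<lambda>v. Suc ((v + Suc n - s) mod Suc n))) x = x"
    unfolding comp_def using assms by (intro unshift_shift_value) auto
qed

definition fixed_by :: "(nat \<Rightarrow> nat) \<Rightarrow> nat \<Rightarrow> nat list \<Rightarrow> bool" where
  "fixed_by \<sigma> n x \<longleftrightarrow> (\<forall>i<n. x ! (\<sigma> i) = x ! i)"

definition fixed_words :: "nat \<Rightarrow> (nat \<Rightarrow> nat) \<Rightarrow> nat list set" where
  "fixed_words n \<sigma> = {b. length b = n \<and> (\<forall>v\<in>set b. v < Suc n) \<and> fixed_by \<sigma> n b}"

definition fixed_parking :: "nat \<Rightarrow> (nat \<Rightarrow> nat) \<Rightarrow> nat list set" where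
  "fixed_parking n \<sigma> = {a \<in> parking n. fixed_by \<sigma> n a}"

lemma pf_char_eq_card_fixed_parking: "pf_char n \<sigma> = card (fixed_parking n \<sigma>)"
  by (simp add: pf_char_def fixed_parking_def fixed_by_def)

lemma fixed_by_map:
  assumes "\<sigma> permutes {..<n}" "length x = n" "fixed_by \<sigma> n x"
  shows "fixed_by \<sigma> n (map f x)"
proof -
  have "\<sigma> i < n" if "i < n" for i using permutes_in_image[OF assms(1)] that by simp
  then show ?thesis using assms by (simp add: fixed_by_def)
qed

lemma length_shift_values [simp]: "length (shift_values n s b) = length b" by (simp add: shift_values_def)
lemma length_unshift_values [simp]: "length (unshift_values n s b) = length b" by (simp add: unshift_values_def)

definition parking_shift :: "nat \<Rightarrow> nat list \<Rightarrow> nat" where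
  "parking_shift n b = (THE s. s < Suc n \<and> shift_values n s b \<in> parking n)"

lemma parking_shift:
  assumes "length b = n" "\<forall>v\<in>set b. v < Suc n"
  shows "parking_shift n b < Suc n" "shift_values n (parking_shift n b) b \<in> parking n"
  using theI'[OF ex1_shift_values_parking[OF assms]] by (simp_all add: parking_shift_def)

lemma parking_shift_unique:
  assumes "length b = n" "\<forall>v\<in>set b. v < Suc n" "s < Suc n" "shift_values n s b \<in> parking n"
  shows "parking_shift n b = s"
  unfolding parking_shift_def
  by (rule the1_equality[OF ex1_shift_values_parking[OF assms(1,2)]]) (use assms in simp)

lemma finite_fixed_parking: "finite (fixed_parking n \<sigma>)"
proof (rule finite_subset)
  show "fixed_parking n \<sigma> \<subseteq> {a. set a \<subseteq> {..n} \<and> length a = n}"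
    using parking_elem_bounds by (auto simp: fixed_parking_def parking_def)
qed (rule finite_lists_length_eq, simp)

text \<open>Every word over {0..n} is a rotation of exactly one parking function (Pollak).\<close>

lemma bij_betw_unshift_values:
  assumes \<sigma>: "\<sigma> permutes {..<n}"
  shows "bij_betw (\<lambda>(a, s). unshift_values n s a) (fixed_parking n \<sigma> \<times> {..<Suc n}) (fixed_words n \<sigma>)"
proof (rule bij_betw_byWitness[where f'="\<lambda>b. (shift_values n (parking_shift n b) b, parking_shift n b)"])
  have unshift: "unshift_values n s a \<in> fixed_words n \<sigma>" if "a \<in> fixed_parking n \<sigma>" for a s
  proof -
    have "length a = n" "fixed_by \<sigma> n a" using that by (auto simp: fixed_parking_def parking_def)
    then show ?thesis
      using fixed_by_map[OF \<sigma>] by (auto simp: fixed_words_def unshift_values_def)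
  qed
  show "(\<lambda>(a, s). unshift_values n s a) ` (fixed_parking n \<sigma> \<times> {..<Suc n}) \<subseteq> fixed_words n \<sigma>"
    using unshift by auto
  show "\<forall>x\<in>fixed_parking n \<sigma> \<times> {..<Suc n}. (\<lambda>b. (shift_values n (parking_shift n b) b,
      parking_shift n b)) ((\<lambda>(a, s). unshift_values n s a) x) = x"
  proof
    fix x assume "x \<in> fixed_parking n \<sigma> \<times> {..<Suc n}"
    then obtain a s where x: "x = (a, s)" and a: "a \<in> fixed_parking n \<sigma>" and s: "s < Suc n" by auto
    then have "\<forall>y\<in>set a. 1 \<le> y \<and> y \<le> n"
      using parking_elem_bounds by (force simp: fixed_parking_def)
    then have shift: "shift_values n s (unshift_values n s a) = a" by (rule shift_unshift_values[OF _ s])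
    have "parking_shift n (unshift_values n s a) = s"
      using unshift[OF a] a s shift by (intro parking_shift_unique) (auto simp: fixed_words_def fixed_parking_def)
    then show "(\<lambda>b. (shift_values n (parking_shift n b) b, parking_shift n b))
        ((\<lambda>(a, s). unshift_values n s a) x) = x" by (simp add: x shift)
  qed
  show "\<forall>b\<in>fixed_words n \<sigma>. (\<lambda>(a, s). unshift_values n s a)
      (shift_values n (parking_shift n b) b, parking_shift n b) = b"
    using parking_shift unshift_shift_values by (auto simp: fixed_words_def)
  show "(\<lambda>b. (shift_values n (parking_shift n b) b, parking_shift n b)) ` fixed_words n \<sigma>
      \<subseteq> fixed_parking n \<sigma> \<times> {..<Suc n}"
    using parking_shift fixed_by_map[OF \<sigma>]
    by (auto simp: fixed_words_def fixed_parking_def shift_values_def)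
qed

lemma card_fixed_words_eq:
  assumes "\<sigma> permutes {..<n}"
  shows "card (fixed_words n \<sigma>) = card (fixed_parking n \<sigma>) * Suc n"
  using bij_betw_same_card[OF bij_betw_unshift_values[OF assms]] finite_fixed_parking
  by (simp add: card_cartesian_product)

lemma fixed_by_on_cyc:
  assumes \<sigma>: "\<sigma> permutes {..<n}" and b: "fixed_by \<sigma> n b" and i: "i < n" and j: "j \<in> cyc \<sigma> i"
  shows "b ! j = b ! i"
proof -
  have "b ! ((\<sigma> ^^ k) i) = b ! i \<and> (\<sigma> ^^ k) i < n" for k
    using b permutes_in_image[OF \<sigma>] i by (induction k) (auto simp: fixed_by_def)
  then show ?thesis using j by (auto simp: cyc_def)
qed

lemma bij_betw_cycle_labelling:
  assumes \<sigma>: "\<sigma> permutes {..<n}"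
  shows "bij_betw (\<lambda>f. map (\<lambda>i. f (cyc \<sigma> i)) [0..<n])
    (cyc \<sigma> ` {..<n} \<rightarrow>\<^sub>E {..<Suc n}) (fixed_words n \<sigma>)"
proof -
  let ?Cs = "cyc \<sigma> ` {..<n}"
  define \<Phi> where "\<Phi> f = map (\<lambda>i. f (cyc \<sigma> i)) [0..<n]" for f :: "nat set \<Rightarrow> nat"
  have "inj_on \<Phi> (?Cs \<rightarrow>\<^sub>E {..<Suc n})"
  proof
    fix f g assume f: "f \<in> ?Cs \<rightarrow>\<^sub>E {..<Suc n}" and g: "g \<in> ?Cs \<rightarrow>\<^sub>E {..<Suc n}" and e: "\<Phi> f = \<Phi> g"
    show "f = g"
    proof (rule PiE_ext[OF f g])
      fix C assume "C \<in> ?Cs"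
      then obtain i where "i < n" "C = cyc \<sigma> i" by auto
      then show "f C = g C" using arg_cong[OF e, of "\<lambda>xs. xs ! i"] by (simp add: \<Phi>_def)
    qed
  qed
  moreover have "\<Phi> ` (?Cs \<rightarrow>\<^sub>E {..<Suc n}) \<subseteq> fixed_words n \<sigma>"
    using permutes_in_image[OF \<sigma>] cyc_apply[OF \<sigma>]
    by (fastforce simp: \<Phi>_def fixed_words_def fixed_by_def PiE_iff)
  moreover have "b \<in> \<Phi> ` (?Cs \<rightarrow>\<^sub>E {..<Suc n})" if b: "b \<in> fixed_words n \<sigma>" for b
  proof
    define f where "f = restrict (\<lambda>C. b ! (SOME i. i \<in> C)) ?Cs"
    have rep: "b ! (SOME j. j \<in> cyc \<sigma> i) = b ! i" if i: "i < n" for i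
      using someI[of "\<lambda>j. j \<in> cyc \<sigma> i" i, OF self_in_cyc] fixed_by_on_cyc[OF \<sigma> _ i] b
      by (simp add: fixed_words_def)
    have len: "length b = n" using b by (simp add: fixed_words_def)
    show "b = \<Phi> f"
      using rep len by (intro nth_equalityI) (auto simp: \<Phi>_def f_def)
    show "f \<in> ?Cs \<rightarrow>\<^sub>E {..<Suc n}"
      using rep len b nth_mem by (fastforce simp: f_def fixed_words_def)
  qed
  ultimately show ?thesis unfolding \<Phi>_def[symmetric] bij_betw_def by blast
qed

lemma card_fixed_words:
  assumes "\<sigma> permutes {..<n}"
  shows "card (fixed_words n \<sigma>) = Suc n ^ card (cyc \<sigma> ` {..<n})"
  using bij_betw_same_card[OF bij_betw_cycle_labelling[OF assms]] by (simp add: card_PiE)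

lemma pf_char_mult_Suc:
  assumes "\<sigma> permutes {..<n}"
  shows "pf_char n \<sigma> * Suc n = Suc n ^ card (cyc \<sigma> ` {..<n})"
  using card_fixed_words_eq[OF assms] card_fixed_words[OF assms] pf_char_eq_card_fixed_parking by simp

section \<open>The shifted parking function series\<close>

lemma prod_odd_psum:
  assumes "finite X"
  shows "(\<Prod>C\<in>X. odd_psum c (card C)) =
    sc (if \<forall>C\<in>X. odd (card C) then c ^ card X else 0) * pmon (image_mset card (mset_set X))"
  using assms
proof (induction X rule: finite_induct)
  case (insert C X)
  let ?M = "\<lambda>X. image_mset card (mset_set X)"
  let ?c = "\<lambda>X. if \<forall>D\<in>X. odd (card D) then c ^ card X else 0"
  show ?case
  proof (cases "odd (card C)")
    case True
    have "(\<Prod>D\<in>insert C X. odd_psum c (card D)) = sc c * psum (card C) * (sc (?c X) * pmon (?M X))"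
      using insert True by (simp add: odd_psum_def)
    also have "\<dots> = sc (c * ?c X) * (psum (card C) * pmon (?M X))"
      by (simp add: sc_mult[symmetric] ac_simps)
    also have "\<dots> = sc (?c (insert C X)) * pmon (?M (insert C X))"
      using insert True by (simp add: pmon_add_mset)
    finally show ?thesis .
  qed (use insert in \<open>simp add: odd_psum_def\<close>)
qed simp

lemma cycle_type_eq_image_cyc: "cycle_type n \<sigma> = image_mset card (mset_set (cyc \<sigma> ` {..<n}))"
proof -
  have "{cyc \<sigma> i |i. i < n} = cyc \<sigma> ` {..<n}" by auto
  then show ?thesis by (simp add: cycle_type_def)
qed

lemma shift_weight_image_card:
  assumes "finite X"
  shows "shift_weight (image_mset card (mset_set X)) = (if \<forall>C\<in>X. odd (card C) then 2 ^ card X else 0)"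
  using assms by (simp add: shift_weight_def)

text \<open>The (n + 1)^(c - 1) fixed parking functions of a permutation with c cycles are absorbed
  by the factor n + 1 in every cycle weight.\<close>

lemma pf_char_shift_weight_eq:
  assumes \<sigma>: "\<sigma> permutes {..<m}"
  shows "sc (1 / of_nat (Suc m)) * cycle_weight (odd_psum (2 * of_nat (Suc m))) \<sigma> {..<m}
       = sc (of_nat (pf_char m \<sigma>)) * shiftify (pmon (cycle_type m \<sigma>))"
proof -
  let ?X = "cyc \<sigma> ` {..<m}"
  let ?N = "card ?X"
  let ?odd = "\<forall>C\<in>?X. odd (card C)"
  have pf: "of_nat (pf_char m \<sigma>) = (of_nat (Suc m) ^ ?N / of_nat (Suc m) :: rat)"
    using arg_cong[OF pf_char_mult_Suc[OF \<sigma>], of "of_nat :: nat \<Rightarrow> rat"]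
    by (simp add: field_simps)
  let ?M = "image_mset card (mset_set ?X)"
  have weight: "1 / of_nat (Suc m) * (if ?odd then (2 * of_nat (Suc m)) ^ ?N else 0) =
      of_nat (pf_char m \<sigma>) * (if ?odd then 2 ^ ?N else (0::rat))"
    by (cases ?odd) (simp_all only: if_True if_False power_mult_distrib pf, simp_all)
  have "sc (1 / of_nat (Suc m)) * cycle_weight (odd_psum (2 * of_nat (Suc m))) \<sigma> {..<m} =
      sc (1 / of_nat (Suc m) * (if ?odd then (2 * of_nat (Suc m)) ^ ?N else 0)) * pmon ?M"
    by (simp add: cycle_weight_def prod_odd_psum sc_mult mult.assoc[symmetric])
  also have "\<dots> = sc (of_nat (pf_char m \<sigma>) * (if ?odd then 2 ^ ?N else 0)) * pmon ?M"
    by (simp only: weight)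
  also have "\<dots> = sc (of_nat (pf_char m \<sigma>)) * shiftify (pmon (cycle_type m \<sigma>))"
    by (simp add: shiftify_pmon cycle_type_eq_image_cyc shift_weight_image_card sc_mult[symmetric]
        mult.assoc)
  finally show ?thesis .
qed

lemma SH_eq_E_coeff: "SH m = sc (1 / of_nat (Suc m)) * E_coeff (2 * of_nat (Suc m)) m"
proof -
  let ?w = "cycle_weight (odd_psum (2 * of_nat (Suc m)))"
  have "SH m = sc (1 / fact m) *
      (\<Sum>\<sigma> | \<sigma> permutes {..<m}. sc (of_nat (pf_char m \<sigma>)) * shiftify (pmon (cycle_type m \<sigma>)))"
    by (simp add: SH_def PF_def shiftify_sc_mult shiftify_sum)
  also have "\<dots> = sc (1 / fact m) * (\<Sum>\<sigma> | \<sigma> permutes {..<m}. sc (1 / of_nat (Suc m)) * ?w \<sigma> {..<m})"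
  proof (intro arg_cong[where f="\<lambda>x. sc (1 / fact m) * x"] sum.cong refl)
    fix \<sigma> assume "\<sigma> \<in> {\<sigma>. \<sigma> permutes {..<m}}"
    then show "sc (of_nat (pf_char m \<sigma>)) * shiftify (pmon (cycle_type m \<sigma>)) =
        sc (1 / of_nat (Suc m)) * ?w \<sigma> {..<m}"
      using pf_char_shift_weight_eq[of \<sigma> m] by simp
  qed
  also have "\<dots> = sc (1 / of_nat (Suc m)) * E_coeff (2 * of_nat (Suc m)) m"
    by (simp only: E_coeff_def cycle_sum_def sum_distrib_left[symmetric] mult.left_commute)
  finally show ?thesis .
qed

lemma K_fps_compose_uminus_X: "K_fps oo (- fps_X) = E_series (- 2)"
  using E_series_compose_uminus_X[of 2]
  by (simp add: K_fps_def E_series_def K_coeff_eq_E_coeff[abs_def])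

lemma left_inverse_coeff_eq_SH:
  assumes H: "H oo (fps_X * E_series (- 2)) = fps_X"
  shows "H $ Suc m = SH m"
proof -
  have "of_nat (Suc m) * H $ Suc m = E_coeff (2 * of_nat (Suc m)) m"
    using lagrange_inversion[OF _ H, of "E_series 2" m]
    by (simp add: E_series_mult E_series_0 E_series_power mult.commute)
  then show ?thesis
    using sc_inverse_mult_cancel[of "Suc m" "H $ Suc m"] by (simp add: SH_eq_E_coeff)
qed

theorem lemma2p3:
  fixes F G :: "symf fps"
  defines "F \<equiv> Abs_fps (\<lambda>m. if m = 0 then 0 else SH (m - 1))"
      and "G \<equiv> fps_X * (K_fps oo (- fps_X))"
  shows "G oo F = fps_X \<and> F oo G = fps_X"
proof -
  have G: "G = fps_X * E_series (- 2)" by (simp add: G_def K_fps_compose_uminus_X)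
  have G0: "G $ 0 = 0" and G1: "G $ 1 = 1" by (simp_all add: G)
  obtain H where H0: "H $ 0 = 0" and HG: "H oo G = fps_X"
    using left_inverse_exists[OF G0 G1] by blast
  have "H = F"
  proof (rule fps_ext)
    fix n show "H $ n = F $ n"
      using H0 left_inverse_coeff_eq_SH[of H "n - 1"] HG by (cases n) (simp_all add: F_def G)
  qed
  with HG have FG: "F oo G = fps_X" by simp
  have "F $ 0 = 0" "F $ 1 = 1" by (simp_all add: F_def SH_eq_E_coeff)
  with fps_left_inverse_imp_right_inverse[OF this G0 FG] FG show ?thesis by simp
qed

end
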